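(* Assume the Composite Assumption (see context), let $\lambda>0$ and $r>\rho_\lambda$. Then for all $x\in\mathcal X$ and $y\in\mathcal Y$, $$\mathrm{dist}\big(0,\partial^\delta_x(F(x,y)+\iota_{\mathcal X}(x))\big)^2\le\|\nabla_zd^\lambda_r(y,x)\|^2,$$ $$\mathrm{dist}\big(0,-\nabla_yF(x,y)+\mathcal N_{\mathcal Y}(y)\big)^2\le2\,\mathrm{dist}\big(0,-\nabla_yF^\lambda(x,y)+\mathcal N_{\mathcal Y}(y)\big)^2+\frac{\lambda^2d_hL_\varphi^2\ell_h^4}2,$$ where $\nabla_zd^\lambda_r(y,x)$ is the gradient of $z\mapsto d^\lambda_r(y,z)$ at $z=x$, and $$\delta=\frac{\rho_\lambda D_{\mathcal X}}r\|\nabla_zd^\lambda_r(y,x)\|+\frac{\ell_\varphi\ell_h\ell_c\sqrt{d_h}}r\|\nabla_zd^\lambda_r(y,x)\|+\Big(\frac{\rho_\lambda}{2r^2}+\frac1r\Big)\|\nabla_zd^\lambda_r(y,x)\|^2+\lambda\ell_\varphi\ell_h^2\sqrt{d_h}.$$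
   Context: Let $\mathcal X\subseteq\mathbb R^{d_x}$, $\mathcal Y\subseteq\mathbb R^{d_y}$ be nonempty closed convex sets and $\mathbb P$ a distribution with support $\Xi$. Let $f(x,y;\xi)=\varphi(h(c(x;\xi)),y;\xi)$ with $\varphi:\mathbb R^{d_h}\times\mathbb R^{d_y}\times\Xi\to\mathbb R$, $h=(h_1,\dots,h_{d_h}):\mathbb R^{d_c}\to\mathbb R^{d_h}$, $c:\mathbb R^{d_x}\times\Xi\to\mathbb R^{d_c}$, with $\varphi$ and $c$ differentiable, and $F(x,y)=\mathbb E_{\xi\sim\mathbb P}[f(x,y;\xi)]$. Composite Assumption: (i) $\mathcal X$ compact with diameter $D_{\mathcal X}$; (ii) $\mathcal Y$ compact with diameter $D_{\mathcal Y}$; (iii) each $c(\cdot;\xi)$ is $\ell_c$-Lipschitz; (iv) each $h_j$ is convex and $\ell_h$-Lipschitz; (v) each $\varphi(\cdot,\cdot;\xi)$ is nondecreasing in its first argument and $\ell_\varphi$-Lipschitz; (vi) $\mathbb E\|\nabla_xc(x_1;\xi)-\nabla_xc(x_2;\xi)\|^2\le L_c^2\|x_1-x_2\|^2$; (vii) for all $u_i,y_i,\xi$: $\|\nabla_1\varphi(u_1,y_1;\xi)-\nabla_1\varphi(u_2,y_2;\xi)\|^2\le L_\varphi^2(\|u_1-u_2\|^2+\|y_1-y_2\|^2)$ and the same for $\nabla_y\varphi$. Smoothing: $h^\lambda_j(w)=\min_q\{h_j(q)+\frac1{2\lambda}\|w-q\|^2\}$, $h^\lambda=(h^\lambda_j)_j$,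 $F^\lambda(x,y)=\mathbb E_{\xi\sim\mathbb P}[\varphi(h^\lambda(c(x;\xi)),y;\xi)]$, $F^\lambda_r(x,y,z)=F^\lambda(x,y)+\frac r2\|x-z\|^2$, $d^\lambda_r(y,z)=\min_{x\in\mathcal X}F^\lambda_r(x,y,z)$. Let $\rho_\lambda=d_hL_\varphi\ell_h^2\ell_c^2+L_c\ell_\varphi\ell_h\sqrt{d_h}$ (the weak convexity modulus of $F(\cdot,y)$ and $F^\lambda(\cdot,y)$). $\iota_{\mathcal X}$ is the $0$–$\infty$ indicator of $\mathcal X$, $\mathcal N_{\mathcal Y}$ the normal cone, and for a function $\Psi$ of $x$, $\partial^\delta\Psi(x)=\{v:\Psi(x')\ge\Psi(x)+v^\top(x'-x)-\frac{\rho_\lambda}2\|x'-x\|^2-\delta\ \ \forall x'\}$. *)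

theory Defs
  imports "HOL-Analysis.Analysis" "HOL-Probability.Probability"
begin

text \<open>Gradient of a real-valued function on a Euclidean space (Riesz representative of
  the Frechet derivative); meaningful when the function is differentiable at the point.\<close>
definition grad :: "('a::euclidean_space \<Rightarrow> real) \<Rightarrow> 'a \<Rightarrow> 'a" where
  "grad f x = (SOME g. (f has_derivative (\<lambda>v. inner g v)) (at x))"

definition iota :: "'a set \<Rightarrow> 'a \<Rightarrow> ereal" where
  "iota S x = (if x \<in> S then 0 else \<infinity>)"

definition normal_cone :: "'a::real_inner set \<Rightarrow> 'a \<Rightarrow> 'a set" where
  "normal_cone Y y = {g. \<forall>y'\<in>Y. inner g (y' - y) \<le> 0}"

definition wsubdiff :: "real \<Rightarrow> real \<Rightarrow> ('a::real_inner \<Rightarrow> ereal) \<Rightarrow> 'a \<Rightarrow> 'a set" where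
  "wsubdiff rho delta Psi x =
     {v. \<forall>x'. Psi x' \<ge> Psi x + ereal (inner v (x' - x) - rho / 2 * (norm (x' - x))\<^sup>2 - delta)}"

definition moreau :: "real \<Rightarrow> ('c::real_normed_vector \<Rightarrow> real) \<Rightarrow> 'c \<Rightarrow> real" where
  "moreau lam g w = Inf ((\<lambda>q. g q + 1 / (2 * lam) * (norm (w - q))\<^sup>2) ` UNIV)"

definition hvec :: "('h::finite \<Rightarrow> 'c \<Rightarrow> real) \<Rightarrow> 'c \<Rightarrow> real ^ 'h" where
  "hvec h w = (\<chi> j. h j w)"

definition hlam :: "real \<Rightarrow> ('h::finite \<Rightarrow> 'c::real_normed_vector \<Rightarrow> real) \<Rightarrow> 'c \<Rightarrow> real ^ 'h" where
  "hlam lam h w = (\<chi> j. moreau lam (h j) w)"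

definition Fobj :: "'xi measure \<Rightarrow> (real^'h \<Rightarrow> 'y \<Rightarrow> 'xi \<Rightarrow> real) \<Rightarrow> ('h::finite \<Rightarrow> 'c \<Rightarrow> real)
    \<Rightarrow> ('x \<Rightarrow> 'xi \<Rightarrow> 'c) \<Rightarrow> 'x \<Rightarrow> 'y \<Rightarrow> real" where
  "Fobj M phi h c x y = (\<integral>\<xi>. phi (hvec h (c x \<xi>)) y \<xi> \<partial>M)"

definition Flam :: "'xi measure \<Rightarrow> real \<Rightarrow> (real^'h \<Rightarrow> 'y \<Rightarrow> 'xi \<Rightarrow> real) \<Rightarrow> ('h::finite \<Rightarrow> 'c::real_normed_vector \<Rightarrow> real)
    \<Rightarrow> ('x \<Rightarrow> 'xi \<Rightarrow> 'c) \<Rightarrow> 'x \<Rightarrow> 'y \<Rightarrow> real" where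
  "Flam M lam phi h c x y = (\<integral>\<xi>. phi (hlam lam h (c x \<xi>)) y \<xi> \<partial>M)"

definition dlam :: "'xi measure \<Rightarrow> real \<Rightarrow> real \<Rightarrow> 'x::real_normed_vector set \<Rightarrow> (real^'h \<Rightarrow> 'y \<Rightarrow> 'xi \<Rightarrow> real)
    \<Rightarrow> ('h::finite \<Rightarrow> 'c::real_normed_vector \<Rightarrow> real) \<Rightarrow> ('x \<Rightarrow> 'xi \<Rightarrow> 'c) \<Rightarrow> 'y \<Rightarrow> 'x \<Rightarrow> real" where
  "dlam M lam r X phi h c y z = Inf ((\<lambda>x. Flam M lam phi h c x y + r / 2 * (norm (x - z))\<^sup>2) ` X)"

end

theory Submission
  imports Defs
begin

(* F^lam(., y) is rho-weakly convex: the Moreau envelopes h^lam_j are convex and lh-Lipschitz, phi is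
   monotone with Lphi-Lipschitz gradient, and the mean-square smoothness of c bounds the expected error
   of linearising c.  Hence for r > rho the proximal objective F^lam(., y) + r/2 |. - z|^2 is strongly
   convex on X, its minimiser p(z) is Lipschitz in z, and d^lam_r(y, .) is differentiable with gradient
   g = r (z - p(z)).  The quadratic growth of the proximal objective at p(x), combined with
   0 <= F - F^lam <= lam lphi lh^2 sqrt dh / 2, the Lipschitz continuity of F and the diameter of X,
   shows that g is a delta-subgradient of F(., y) + iota_X at x.  For the second inequality, grad_y F
   and grad_y F^lam are expectations of y-gradients of phi at h(c) and h^lam(c), which are at most
   sqrt dh lam lh^2 / 2 apart, and the distance from 0 to a translate of the normal cone is
   1-Lipschitz in the translation. *)

section \<open>Gradients and the descent lemma\<close>

lemma grad_has_derivative: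
  fixes f :: "'a::euclidean_space \<Rightarrow> real"
  assumes "f differentiable (at x)"
  shows "(f has_derivative (\<lambda>v. inner (grad f x) v)) (at x)"
proof -
  from assms obtain D where D: "(f has_derivative D) (at x)"
    unfolding differentiable_def by blast
  then have lin: "linear D" using has_derivative_linear by blast
  define g where "g = (\<Sum>b\<in>Basis. D b *\<^sub>R b)"
  have "D = (\<lambda>v. inner g v)"
  proof
    fix v
    have "D v = D (\<Sum>b\<in>Basis. (v \<bullet> b) *\<^sub>R b)" by (simp add: euclidean_representation)
    also have "\<dots> = (\<Sum>b\<in>Basis. (v \<bullet> b) * D b)" by (simp add: linear_sum[OF lin] linear_scale[OF lin])
    also have "\<dots> = inner g v" by (simp add: g_def inner_sum_right inner_commute mult.commute)
    finally show "D v = inner g v" .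
  qed
  with D have "\<exists>g. (f has_derivative (\<lambda>v. inner g v)) (at x)" by auto
  then show ?thesis unfolding grad_def by (rule someI_ex)
qed

lemma grad_eqI:
  fixes f :: "'a::euclidean_space \<Rightarrow> real"
  assumes "(f has_derivative (\<lambda>v. inner g v)) (at x)"
  shows "grad f x = g"
proof -
  have "f differentiable (at x)" using assms unfolding differentiable_def by blast
  from has_derivative_unique[OF grad_has_derivative[OF this] assms]
  have "inner (grad f x) (grad f x - g) = inner g (grad f x - g)" by metis
  then have "inner (grad f x - g) (grad f x - g) = 0" by (simp add: inner_diff_left)
  then show ?thesis by simp
qed

lemma has_derivative_difference_quotient_LIMSEQ:
  fixes f :: "'a::euclidean_space \<Rightarrow> 'b::real_normed_vector"
  assumes d: "(f has_derivative D) (at x)"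
  shows "(\<lambda>n. real (Suc n) *\<^sub>R (f (x + inverse (real (Suc n)) *\<^sub>R v) - f x)) \<longlonglongrightarrow> D v"
proof (cases "v = 0")
  case True
  have "linear D" using d has_derivative_linear by blast
  then show ?thesis using True by (simp add: linear_0)
next
  case False
  have bl: "bounded_linear D" using d has_derivative_bounded_linear by blast
  have lim: "(\<lambda>k. norm (f (x + k) - f x - D k) / norm k) \<midarrow>0\<rightarrow> 0"
    using d unfolding has_derivative_at by blast
  define k where "k n = inverse (real (Suc n)) *\<^sub>R v" for n
  have "k \<longlonglongrightarrow> 0" unfolding k_def
    using tendsto_scaleR[OF LIMSEQ_inverse_real_of_nat tendsto_const[of v]] by simp
  moreover have "\<forall>n. k n \<in> UNIV - {0}" using False by (simp add: k_def)
  ultimately have "((\<lambda>k. norm (f (x + k) - f x - D k) / norm k) \<circ> k) \<longlonglongrightarrow> 0"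
    using lim unfolding tendsto_at_iff_sequentially by blast
  then have l: "(\<lambda>n. norm v * (norm (f (x + k n) - f x - D (k n)) / norm (k n))) \<longlonglongrightarrow> 0"
    using tendsto_mult[OF tendsto_const[of "norm v"]] by (force simp: o_def)
  have "norm v * (norm (f (x + k n) - f x - D (k n)) / norm (k n))
      = norm (real (Suc n) *\<^sub>R (f (x + inverse (real (Suc n)) *\<^sub>R v) - f x) - D v)" for n
  proof -
    have "D (k n) = inverse (real (Suc n)) *\<^sub>R D v"
      unfolding k_def by (simp add: linear_simps(5)[OF bl])
    then have e: "real (Suc n) *\<^sub>R (f (x + k n) - f x) - D v = real (Suc n) *\<^sub>R (f (x + k n) - f x - D (k n))"
      by (simp add: scaleR_diff_right del: of_nat_Suc)
    have nk: "norm (k n) = norm v / real (Suc n)"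
      by (simp add: k_def divide_inverse mult.commute)
    have "norm v * (norm (f (x + k n) - f x - D (k n)) / norm (k n))
        = real (Suc n) * norm (f (x + k n) - f x - D (k n))"
      using False by (simp add: nk field_simps del: of_nat_Suc)
    also have "\<dots> = norm (real (Suc n) *\<^sub>R (f (x + k n) - f x) - D v)" unfolding e by simp
    finally show ?thesis by (simp add: k_def)
  qed
  with l show ?thesis by (simp add: LIM_zero_iff tendsto_norm_zero_iff)
qed

lemma has_derivative_norm_le_lipschitz:
  fixes f :: "'a::euclidean_space \<Rightarrow> 'b::real_normed_vector"
  assumes d: "(f has_derivative D) (at x)" and L: "L-lipschitz_on UNIV f"
  shows "norm (D v) \<le> L * norm v"
proof -
  have "norm (real (Suc n) *\<^sub>R (f (x + inverse (real (Suc n)) *\<^sub>R v) - f x)) \<le> L * norm v" for n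
  proof -
    have "norm (real (Suc n) *\<^sub>R (f (x + inverse (real (Suc n)) *\<^sub>R v) - f x))
        = real (Suc n) * norm (f (x + inverse (real (Suc n)) *\<^sub>R v) - f x)" by simp
    also have "\<dots> \<le> real (Suc n) * (L * norm (inverse (real (Suc n)) *\<^sub>R v))"
      using lipschitz_on_normD[OF L, of "x + inverse (real (Suc n)) *\<^sub>R v" x]
      by (intro mult_left_mono) auto
    also have "\<dots> = L * norm v" by (simp del: of_nat_Suc)
    finally show ?thesis .
  qed
  then show ?thesis
    using LIMSEQ_le_const2[OF tendsto_norm[OF has_derivative_difference_quotient_LIMSEQ[OF d]]] by blast
qed

lemma norm_grad_le_lipschitz:
  fixes f :: "'a::euclidean_space \<Rightarrow> real"
  assumes "f differentiable (at x)" and "L-lipschitz_on UNIV f"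
  shows "norm (grad f x) \<le> L"
proof (cases "grad f x = 0")
  case True
  then show ?thesis using assms(2) lipschitz_on_nonneg by simp
next
  case False
  have "norm (inner (grad f x) (grad f x)) \<le> L * norm (grad f x)"
    by (rule has_derivative_norm_le_lipschitz[OF grad_has_derivative[OF assms(1)] assms(2)])
  then have "norm (grad f x) * norm (grad f x) \<le> L * norm (grad f x)"
    by (simp add: power2_norm_eq_inner[symmetric] power2_eq_square)
  with False show ?thesis by simp
qed

lemma has_derivative_quadratic_remainderI:
  fixes f :: "'a::euclidean_space \<Rightarrow> real"
  assumes b: "\<And>k. \<bar>f (z + k) - f z - inner g k\<bar> \<le> C * (norm k)\<^sup>2"
  shows "(f has_derivative (\<lambda>k. inner g k)) (at z)"
  unfolding has_derivative_at'
proof (intro conjI allI impI bounded_linear_inner_right)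
  fix e :: real assume e: "0 < e"
  define d where "d = e / (\<bar>C\<bar> + 1)"
  have d: "0 < d" using e by (simp add: d_def)
  show "\<exists>d>0. \<forall>x'. 0 < norm (x' - z) \<and> norm (x' - z) < d \<longrightarrow>
        norm (f x' - f z - inner g (x' - z)) / norm (x' - z) < e"
  proof (intro exI[of _ d] conjI allI impI d)
    fix x' assume x': "0 < norm (x' - z) \<and> norm (x' - z) < d"
    have "norm (f x' - f z - inner g (x' - z)) \<le> \<bar>C\<bar> * (norm (x' - z))\<^sup>2"
      using b[of "x' - z"] by (simp add: order_trans[OF _ mult_right_mono])
    then have "norm (f x' - f z - inner g (x' - z)) / norm (x' - z) \<le> \<bar>C\<bar> * norm (x' - z)"
      using x' by (simp add: divide_le_eq power2_eq_square mult.assoc)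
    also have "\<dots> \<le> \<bar>C\<bar> * d" using x' by (intro mult_left_mono) auto
    also have "\<dots> < e" using e by (simp add: d_def field_simps)
    finally show "norm (f x' - f z - inner g (x' - z)) / norm (x' - z) < e" .
  qed
qed

lemma DERIV_increment_le:
  fixes p p' :: "real \<Rightarrow> real"
  assumes "\<And>s. 0 \<le> s \<Longrightarrow> s \<le> 1 \<Longrightarrow> (p has_real_derivative p' s) (at s)"
    and "\<And>s. 0 \<le> s \<Longrightarrow> s \<le> 1 \<Longrightarrow> p' s - p' 0 \<le> L * s"
  shows "p 1 - p 0 - p' 0 \<le> L / 2"
proof -
  define q where "q s = p s - s * p' 0 - L / 2 * s\<^sup>2" for s
  have "q 1 \<le> q 0"
  proof (rule DERIV_nonpos_imp_nonincreasing[of 0 1])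
    fix s :: real assume s: "0 \<le> s" "s \<le> 1"
    have "(q has_real_derivative p' s - p' 0 - L * s) (at s)"
      unfolding q_def by (auto intro!: derivative_eq_intros assms(1)[OF s] simp: power2_eq_square)
    with assms(2)[OF s] show "\<exists>y. (q has_real_derivative y) (at s) \<and> y \<le> 0" by auto
  qed simp
  then show ?thesis by (simp add: q_def)
qed

lemma lipschitz_gradient_remainder_bound:
  fixes f :: "'a::euclidean_space \<Rightarrow> real" and G :: "'a \<Rightarrow> 'a"
  assumes d: "\<And>z. (f has_derivative (\<lambda>v. inner (G z) v)) (at z)"
    and L: "\<And>a b. norm (G a - G b) \<le> L * norm (a - b)"
  shows "\<bar>f b - f a - inner (G a) (b - a)\<bar> \<le> L / 2 * (norm (b - a))\<^sup>2"
proof -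
  define v where "v = b - a"
  define p where "p s = f (a + s *\<^sub>R v)" for s
  define p' where "p' s = inner (G (a + s *\<^sub>R v)) v" for s
  have p: "(p has_real_derivative p' s) (at s)" for s
  proof -
    have "((\<lambda>s. a + s *\<^sub>R v) has_derivative (\<lambda>t. t *\<^sub>R v)) (at s)"
      by (auto intro!: derivative_eq_intros)
    from has_derivative_compose[OF this d]
    have "((\<lambda>s. f (a + s *\<^sub>R v)) has_derivative (\<lambda>t. t * p' s)) (at s)"
      by (simp add: o_def p'_def)
    moreover have "(\<lambda>t. t * p' s) = (*) (p' s)" by (simp add: fun_eq_iff)
    ultimately show ?thesis unfolding p_def has_field_derivative_def by simp
  qed
  have p': "\<bar>p' s - p' 0\<bar> \<le> L * (norm v)\<^sup>2 * s" if "0 \<le> s" for s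
  proof -
    have "\<bar>p' s - p' 0\<bar> = \<bar>inner (G (a + s *\<^sub>R v) - G a) v\<bar>"
      by (simp add: p'_def inner_diff_left)
    also have "\<dots> \<le> norm (G (a + s *\<^sub>R v) - G a) * norm v" by (rule Cauchy_Schwarz_ineq2)
    also have "\<dots> \<le> (L * norm (s *\<^sub>R v)) * norm v"
      using L[of "a + s *\<^sub>R v" a] by (intro mult_right_mono) auto
    finally show ?thesis using that by (simp add: power2_eq_square mult_ac)
  qed
  have "p 1 - p 0 - p' 0 \<le> L * (norm v)\<^sup>2 / 2"
    using DERIV_increment_le[of p p' "L * (norm v)\<^sup>2"] p p' by (force simp: abs_le_iff)
  moreover have "(- p 1) - (- p 0) - (- p' 0) \<le> L * (norm v)\<^sup>2 / 2"
    using DERIV_increment_le[of "\<lambda>s. - p s" "\<lambda>s. - p' s" "L * (norm v)\<^sup>2"] p p'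
    by (force intro: DERIV_minus simp: abs_le_iff)
  ultimately show ?thesis
    unfolding abs_le_iff p_def p'_def v_def by (simp add: inner_diff_right algebra_simps)
qed

section \<open>Weak convexity and proximal points\<close>

text \<open>A negative modulus \<open>- \<mu>\<close> expresses strong convexity with modulus \<open>\<mu>\<close>.\<close>

definition weakly_convex_on :: "real \<Rightarrow> 'a::real_normed_vector set \<Rightarrow> ('a \<Rightarrow> real) \<Rightarrow> bool" where
  "weakly_convex_on \<rho> S f \<longleftrightarrow> (\<forall>x\<in>S. \<forall>y\<in>S. \<forall>t. 0 \<le> t \<longrightarrow> t \<le> 1 \<longrightarrow>
     f (t *\<^sub>R x + (1 - t) *\<^sub>R y) \<le> t * f x + (1 - t) * f y + \<rho> / 2 * (t * (1 - t)) * (norm (x - y))\<^sup>2)"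

lemma weakly_convex_onI:
  assumes "\<And>x y t. x \<in> S \<Longrightarrow> y \<in> S \<Longrightarrow> 0 \<le> t \<Longrightarrow> t \<le> 1 \<Longrightarrow>
    f (t *\<^sub>R x + (1 - t) *\<^sub>R y) \<le> t * f x + (1 - t) * f y + \<rho> / 2 * (t * (1 - t)) * (norm (x - y))\<^sup>2"
  shows "weakly_convex_on \<rho> S f"
  using assms unfolding weakly_convex_on_def by blast

lemma weakly_convex_onD:
  assumes "weakly_convex_on \<rho> S f" "x \<in> S" "y \<in> S" "0 \<le> t" "t \<le> 1"
  shows "f (t *\<^sub>R x + (1 - t) *\<^sub>R y) \<le> t * f x + (1 - t) * f y + \<rho> / 2 * (t * (1 - t)) * (norm (x - y))\<^sup>2"
  using assms unfolding weakly_convex_on_def by blast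

lemma weakly_convex_on_subset:
  "weakly_convex_on \<rho> S f \<Longrightarrow> T \<subseteq> S \<Longrightarrow> weakly_convex_on \<rho> T f"
  unfolding weakly_convex_on_def by blast

lemma lipschitz_gradient_imp_weakly_convex:
  fixes f :: "'a::euclidean_space \<Rightarrow> real" and G :: "'a \<Rightarrow> 'a"
  assumes d: "\<And>z. (f has_derivative (\<lambda>v. inner (G z) v)) (at z)"
    and L: "\<And>a b. norm (G a - G b) \<le> L * norm (a - b)"
  shows "weakly_convex_on L UNIV f"
proof (rule weakly_convex_onI)
  fix x y :: 'a and t :: real assume t: "0 \<le> t" "t \<le> 1"
  define z where "z = t *\<^sub>R x + (1 - t) *\<^sub>R y"
  define g where "g = inner (G z) (x - y)"
  have "x - z = (1 - t) *\<^sub>R (x - y)" "y - z = (- t) *\<^sub>R (x - y)"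
    by (simp_all add: z_def algebra_simps)
  then have x: "inner (G z) (x - z) = (1 - t) * g" "(norm (x - z))\<^sup>2 = (1 - t)\<^sup>2 * (norm (x - y))\<^sup>2"
    and y: "inner (G z) (y - z) = - t * g" "(norm (y - z))\<^sup>2 = t\<^sup>2 * (norm (x - y))\<^sup>2"
    using t by (simp_all add: g_def power_mult_distrib)
  have "f z + (1 - t) * g - L / 2 * ((1 - t)\<^sup>2 * (norm (x - y))\<^sup>2) \<le> f x"
    using abs_le_D2[OF lipschitz_gradient_remainder_bound[OF d L, where a = z and b = x]]
    unfolding x by linarith
  moreover have "f z - t * g - L / 2 * (t\<^sup>2 * (norm (x - y))\<^sup>2) \<le> f y"
    using abs_le_D2[OF lipschitz_gradient_remainder_bound[OF d L, where a = z and b = y]]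
    unfolding y by linarith
  ultimately have "t * (f z + (1 - t) * g - L / 2 * ((1 - t)\<^sup>2 * (norm (x - y))\<^sup>2))
      + (1 - t) * (f z - t * g - L / 2 * (t\<^sup>2 * (norm (x - y))\<^sup>2)) \<le> t * f x + (1 - t) * f y"
    using t by (intro add_mono mult_left_mono) auto
  moreover have "t * (f z + (1 - t) * g - L / 2 * ((1 - t)\<^sup>2 * (norm (x - y))\<^sup>2))
      + (1 - t) * (f z - t * g - L / 2 * (t\<^sup>2 * (norm (x - y))\<^sup>2))
      = f z - L / 2 * (t * (1 - t)) * (norm (x - y))\<^sup>2"
    by (simp add: field_simps power2_eq_square)
  ultimately show "f z \<le> t * f x + (1 - t) * f y + L / 2 * (t * (1 - t)) * (norm (x - y))\<^sup>2"
    by linarith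
qed

lemma norm_convex_combination_square:
  fixes u v :: "'a::real_inner"
  shows "(norm (t *\<^sub>R u + (1 - t) *\<^sub>R v))\<^sup>2 = t * (norm u)\<^sup>2 + (1 - t) * (norm v)\<^sup>2 - t * (1 - t) * (norm (u - v))\<^sup>2"
  by (simp add: power2_norm_eq_inner inner_add_left inner_add_right inner_diff_left inner_diff_right
      inner_commute algebra_simps)

lemma weakly_convex_on_add_quadratic:
  fixes f :: "'a::real_inner \<Rightarrow> real"
  assumes "weakly_convex_on \<rho> S f"
  shows "weakly_convex_on (\<rho> - r) S (\<lambda>x. f x + r / 2 * (norm (x - z))\<^sup>2)"
proof (rule weakly_convex_onI)
  fix x y and t :: real assume xy: "x \<in> S" "y \<in> S" and t: "0 \<le> t" "t \<le> 1"
  have "t *\<^sub>R x + (1 - t) *\<^sub>R y - z = t *\<^sub>R (x - z) + (1 - t) *\<^sub>R (y - z)"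
    by (simp add: algebra_simps)
  then have q: "(norm (t *\<^sub>R x + (1 - t) *\<^sub>R y - z))\<^sup>2
      = t * (norm (x - z))\<^sup>2 + (1 - t) * (norm (y - z))\<^sup>2 - t * (1 - t) * (norm (x - y))\<^sup>2"
    using norm_convex_combination_square[of t "x - z" "y - z"] by simp
  show "f (t *\<^sub>R x + (1 - t) *\<^sub>R y) + r / 2 * (norm (t *\<^sub>R x + (1 - t) *\<^sub>R y - z))\<^sup>2
      \<le> t * (f x + r / 2 * (norm (x - z))\<^sup>2) + (1 - t) * (f y + r / 2 * (norm (y - z))\<^sup>2)
        + (\<rho> - r) / 2 * (t * (1 - t)) * (norm (x - y))\<^sup>2"
    unfolding q using weakly_convex_onD[OF assms xy t] by (simp add: field_simps)
qed

lemma weakly_convex_on_minimizer_growth: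
  assumes wc: "weakly_convex_on (- \<mu>) S f" and S: "convex S"
    and a: "a \<in> S" "\<And>x. x \<in> S \<Longrightarrow> f a \<le> f x" and x: "x \<in> S"
  shows "f a + \<mu> / 2 * (norm (x - a))\<^sup>2 \<le> f x"
proof -
  define A where "A = f x - f a"
  define B where "B = \<mu> / 2 * (norm (x - a))\<^sup>2"
  have A: "0 \<le> A" using a x by (simp add: A_def)
  have key: "(1 - s) * B \<le> A" if s: "0 < s" "s \<le> 1" for s
  proof -
    have "s *\<^sub>R x + (1 - s) *\<^sub>R a \<in> S"
      using S x a(1) s by (intro convexD) auto
    then have "f a \<le> s * f x + (1 - s) * f a - s * ((1 - s) * B)"
      using a(2) weakly_convex_onD[OF wc x a(1), of s] s by (fastforce simp: B_def algebra_simps)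
    then have "s * ((1 - s) * B) \<le> s * A" by (simp add: A_def algebra_simps)
    with s show ?thesis by simp
  qed
  have "B \<le> A"
  proof (rule ccontr)
    assume "\<not> B \<le> A"
    then have AB: "A < B" and B: "0 < B" using A by auto
    define s where "s = (B - A) / (2 * B)"
    have "0 < s" "s \<le> 1" using AB A B by (auto simp: s_def divide_le_eq)
    moreover have "(1 - s) * B = (A + B) / 2" using B by (simp add: s_def field_simps)
    ultimately show False using key AB by fastforce
  qed
  then show ?thesis by (simp add: A_def B_def)
qed

locale weakly_convex_proximal =
  fixes X :: "'a::euclidean_space set" and f :: "'a \<Rightarrow> real" and \<rho> r :: real
  assumes X_compact: "compact X" and X_convex: "convex X" and X_nonempty: "X \<noteq> {}"
    and f_continuous: "continuous_on X f" and f_weakly_convex: "weakly_convex_on \<rho> X f"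
    and rho_nonneg: "0 \<le> \<rho>" and rho_less: "\<rho> < r"
begin

definition prox_objective :: "'a \<Rightarrow> 'a \<Rightarrow> real" where
  "prox_objective z x = f x + r / 2 * (norm (x - z))\<^sup>2"

definition prox :: "'a \<Rightarrow> 'a" where
  "prox z = (SOME x. x \<in> X \<and> (\<forall>x'\<in>X. prox_objective z x \<le> prox_objective z x'))"

lemma prox_in_argmin: "prox z \<in> X \<and> (\<forall>x'\<in>X. prox_objective z (prox z) \<le> prox_objective z x')"
proof -
  have "continuous_on X (prox_objective z)"
    unfolding prox_objective_def by (intro continuous_intros f_continuous)
  then have "\<exists>x. x \<in> X \<and> (\<forall>x'\<in>X. prox_objective z x \<le> prox_objective z x')"
    using continuous_attains_inf[OF X_compact X_nonempty] by blast
  then show ?thesis unfolding prox_def by (rule someI_ex)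
qed

lemma prox_in: "prox z \<in> X"
  using prox_in_argmin by blast

lemma prox_le: "x \<in> X \<Longrightarrow> prox_objective z (prox z) \<le> prox_objective z x"
  using prox_in_argmin by blast

lemma Inf_prox_objective: "Inf ((\<lambda>x. f x + r / 2 * (norm (x - z))\<^sup>2) ` X) = prox_objective z (prox z)"
  by (rule cInf_eq_minimum) (use prox_in prox_le in \<open>auto simp: prox_objective_def\<close>)

lemma prox_objective_growth:
  assumes "x \<in> X"
  shows "prox_objective z (prox z) + (r - \<rho>) / 2 * (norm (x - prox z))\<^sup>2 \<le> prox_objective z x"
proof (rule weakly_convex_on_minimizer_growth[where f = "prox_objective z" and \<mu> = "r - \<rho>",
      OF _ X_convex prox_in prox_le assms])
  show "weakly_convex_on (- (r - \<rho>)) X (prox_objective z)"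
    using weakly_convex_on_add_quadratic[OF f_weakly_convex, of r z]
    by (simp add: prox_objective_def[abs_def])
qed

lemma prox_objective_shift:
  "prox_objective (z + k) x - prox_objective z x = inner (r *\<^sub>R (z - x)) k + r / 2 * (norm k)\<^sup>2"
  by (simp add: prox_objective_def power2_norm_eq_inner inner_diff_left inner_diff_right
      inner_add_left inner_add_right inner_commute algebra_simps)

lemma norm_prox_diff_le: "norm (prox z' - prox z) \<le> r / (r - \<rho>) * norm (z' - z)"
proof -
  define a a' where "a = prox z" and "a' = prox z'"
  have "prox_objective z a + (r - \<rho>) / 2 * (norm (a' - a))\<^sup>2 \<le> prox_objective z a'"
    "prox_objective z' a' + (r - \<rho>) / 2 * (norm (a - a'))\<^sup>2 \<le> prox_objective z' a"
    unfolding a_def a'_def by (intro prox_objective_growth prox_in)+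
  moreover have "prox_objective z' a - prox_objective z a - (prox_objective z' a' - prox_objective z a')
      = r * inner (a' - a) (z' - z)"
    using prox_objective_shift[of z "z' - z" a] prox_objective_shift[of z "z' - z" a']
    by (simp add: inner_diff_left algebra_simps)
  ultimately have "(r - \<rho>) * (norm (a' - a))\<^sup>2 \<le> r * inner (a' - a) (z' - z)"
    by (simp add: norm_minus_commute[of a a'] field_simps)
  also have "\<dots> \<le> r * (norm (a' - a) * norm (z' - z))"
    using rho_nonneg rho_less by (intro mult_left_mono order_trans[OF abs_ge_self Cauchy_Schwarz_ineq2]) auto
  finally have "(r - \<rho>) * norm (a' - a) * norm (a' - a) \<le> r * norm (z' - z) * norm (a' - a)"
    by (simp add: power2_eq_square mult_ac)
  then have "(r - \<rho>) * norm (a' - a) \<le> r * norm (z' - z)"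
    by (cases "a' = a") (use rho_nonneg rho_less in auto)
  with rho_less show ?thesis by (simp add: a_def a'_def field_simps)
qed

text \<open>The envelope is sandwiched between the two proximal objectives at \<open>prox z\<close> and
  \<open>prox (z + k)\<close>, whose difference is \<open>O(|k|\<^sup>2)\<close> by the Lipschitz continuity of \<open>prox\<close>.\<close>

lemma has_derivative_prox_envelope:
  "((\<lambda>z. Inf ((\<lambda>x. f x + r / 2 * (norm (x - z))\<^sup>2) ` X)) has_derivative
     (\<lambda>k. inner (r *\<^sub>R (z - prox z)) k)) (at z)"
proof (rule has_derivative_quadratic_remainderI[where C = "r / 2 + r * (r / (r - \<rho>))"])
  fix k
  define a a' where "a = prox z" and "a' = prox (z + k)"
  have up: "prox_objective (z + k) a' \<le> prox_objective (z + k) a"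
    and lo: "prox_objective z a \<le> prox_objective z a'"
    unfolding a_def a'_def by (intro prox_le prox_in)+
  have "\<bar>r * inner (a - a') k\<bar> \<le> r * (norm (a' - a) * norm k)"
    using rho_nonneg rho_less Cauchy_Schwarz_ineq2[of "a - a'" k]
    by (simp add: abs_mult norm_minus_commute)
  also have "\<dots> \<le> r * ((r / (r - \<rho>) * norm k) * norm k)"
    using norm_prox_diff_le[of "z + k" z] rho_nonneg rho_less
    by (intro mult_left_mono mult_right_mono) (auto simp: a_def a'_def)
  finally have cs: "\<bar>r * inner (a - a') k\<bar> \<le> r * (r / (r - \<rho>)) * (norm k)\<^sup>2"
    by (simp add: power2_eq_square mult_ac)
  have "0 \<le> r / 2 * (norm k)\<^sup>2" "0 \<le> r * (r / (r - \<rho>)) * (norm k)\<^sup>2"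
    using rho_nonneg rho_less by simp_all
  with up lo cs prox_objective_shift[of z k a] prox_objective_shift[of z k a']
  have "\<bar>prox_objective (z + k) a' - prox_objective z a - inner (r *\<^sub>R (z - a)) k\<bar>
      \<le> (r / 2 + r * (r / (r - \<rho>))) * (norm k)\<^sup>2"
    by (simp add: abs_le_iff inner_diff_left algebra_simps)
  then show "\<bar>Inf ((\<lambda>x. f x + r / 2 * (norm (x - (z + k)))\<^sup>2) ` X) - Inf ((\<lambda>x. f x + r / 2 * (norm (x - z))\<^sup>2) ` X)
      - inner (r *\<^sub>R (z - prox z)) k\<bar> \<le> (r / 2 + r * (r / (r - \<rho>))) * (norm k)\<^sup>2"
    unfolding Inf_prox_objective a_def a'_def .
qed

end

section \<open>Moreau envelopes and monotone compositions\<close>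

lemma lipschitz_le_moreau_objective:
  fixes g :: "'c::real_normed_vector \<Rightarrow> real"
  assumes lip: "L-lipschitz_on UNIV g" and lam: "0 < lam"
  shows "g w - lam * L\<^sup>2 / 2 \<le> g q + 1 / (2 * lam) * (norm (w - q))\<^sup>2"
proof -
  have "g w - g q \<le> L * norm (w - q)"
    using lipschitz_on_normD[OF lip, of w q] by simp
  moreover have "L * norm (w - q) \<le> lam * L\<^sup>2 / 2 + 1 / (2 * lam) * (norm (w - q))\<^sup>2"
  proof -
    have "2 * lam * (L * norm (w - q)) \<le> lam\<^sup>2 * L\<^sup>2 + (norm (w - q))\<^sup>2"
      using sum_squares_bound[of "lam * L" "norm (w - q)"] by (simp add: power_mult_distrib algebra_simps)
    then show ?thesis using lam by (simp add: field_simps power2_eq_square)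
  qed
  ultimately show ?thesis by linarith
qed

lemma moreau_le:
  fixes g :: "'c::real_normed_vector \<Rightarrow> real"
  assumes "L-lipschitz_on UNIV g" and "0 < lam"
  shows "moreau lam g w \<le> g q + 1 / (2 * lam) * (norm (w - q))\<^sup>2"
  unfolding moreau_def
proof (rule cInf_lower)
  show "bdd_below ((\<lambda>q. g q + 1 / (2 * lam) * (norm (w - q))\<^sup>2) ` UNIV)"
    using lipschitz_le_moreau_objective[OF assms, of w] by (intro bdd_belowI2)
qed simp

lemma moreau_le_self:
  fixes g :: "'c::real_normed_vector \<Rightarrow> real"
  assumes "L-lipschitz_on UNIV g" and "0 < lam"
  shows "moreau lam g w \<le> g w"
  using moreau_le[OF assms, of w w] by simp

lemma moreau_greatest:
  fixes g :: "'c::real_normed_vector \<Rightarrow> real"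
  assumes "\<And>q. m \<le> g q + 1 / (2 * lam) * (norm (w - q))\<^sup>2"
  shows "m \<le> moreau lam g w"
  unfolding moreau_def by (rule cInf_greatest) (use assms in auto)

lemma moreau_ge:
  fixes g :: "'c::real_normed_vector \<Rightarrow> real"
  assumes "L-lipschitz_on UNIV g" and "0 < lam"
  shows "g w - lam * L\<^sup>2 / 2 \<le> moreau lam g w"
  by (rule moreau_greatest) (rule lipschitz_le_moreau_objective[OF assms])

lemma lipschitz_on_moreau:
  fixes g :: "'c::real_normed_vector \<Rightarrow> real"
  assumes lip: "L-lipschitz_on UNIV g" and lam: "0 < lam"
  shows "L-lipschitz_on UNIV (moreau lam g)"
proof -
  have shift: "moreau lam g w' - L * norm (w' - w) \<le> moreau lam g w" for w w'
  proof (rule moreau_greatest)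
    fix q
    have "moreau lam g w' \<le> g (q + (w' - w)) + 1 / (2 * lam) * (norm (w' - (q + (w' - w))))\<^sup>2"
      by (rule moreau_le[OF assms])
    also have "g (q + (w' - w)) \<le> g q + L * norm (w' - w)"
      using lipschitz_on_normD[OF lip, of "q + (w' - w)" q] by simp
    finally show "moreau lam g w' - L * norm (w' - w) \<le> g q + 1 / (2 * lam) * (norm (w - q))\<^sup>2"
      by (simp add: algebra_simps)
  qed
  show ?thesis
  proof (rule lipschitz_onI)
    show "dist (moreau lam g a) (moreau lam g b) \<le> L * dist a b" for a b
      using shift[of b a] shift[of a b] by (simp add: dist_norm norm_minus_commute abs_le_iff)
  qed (rule lipschitz_on_nonneg[OF lip])
qed

lemma convex_on_moreau:
  fixes g :: "'c::real_inner \<Rightarrow> real"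
  assumes lip: "L-lipschitz_on UNIV g" and lam: "0 < lam" and cv: "convex_on UNIV g"
  shows "convex_on UNIV (moreau lam g)"
proof (rule convex_onI)
  fix t :: real and a b :: 'c
  assume t: "0 < t" "t < 1"
  let ?m = "moreau lam g ((1 - t) *\<^sub>R a + t *\<^sub>R b)"
  let ?A = "\<lambda>q. g q + 1 / (2 * lam) * (norm (a - q))\<^sup>2"
  let ?B = "\<lambda>q. g q + 1 / (2 * lam) * (norm (b - q))\<^sup>2"
  have joint: "?m \<le> (1 - t) * ?A qa + t * ?B qb" for qa qb
  proof -
    have "?m \<le> g ((1 - t) *\<^sub>R qa + t *\<^sub>R qb)
        + 1 / (2 * lam) * (norm (((1 - t) *\<^sub>R a + t *\<^sub>R b) - ((1 - t) *\<^sub>R qa + t *\<^sub>R qb)))\<^sup>2"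
      by (rule moreau_le[OF lip lam])
    also have "g ((1 - t) *\<^sub>R qa + t *\<^sub>R qb) \<le> (1 - t) * g qa + t * g qb"
      using convex_onD[OF cv, of t qa qb] t by simp
    also have "((1 - t) *\<^sub>R a + t *\<^sub>R b) - ((1 - t) *\<^sub>R qa + t *\<^sub>R qb) = (1 - t) *\<^sub>R (a - qa) + t *\<^sub>R (b - qb)"
      by (simp add: algebra_simps)
    also have "(norm ((1 - t) *\<^sub>R (a - qa) + t *\<^sub>R (b - qb)))\<^sup>2 \<le> (1 - t) * (norm (a - qa))\<^sup>2 + t * (norm (b - qb))\<^sup>2"
      using norm_convex_combination_square[of "1 - t" "a - qa" "b - qb"] t by simp
    finally show ?thesis using lam t by (simp add: algebra_simps divide_simps)
  qed
  have "(?m - t * ?B qb) / (1 - t) \<le> moreau lam g a" for qb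
    by (rule moreau_greatest) (use joint t in \<open>simp add: divide_le_eq algebra_simps\<close>)
  then have "(?m - (1 - t) * moreau lam g a) / t \<le> moreau lam g b"
    by (intro moreau_greatest) (use t in \<open>simp add: divide_le_eq le_divide_eq algebra_simps\<close>)
  then show "?m \<le> (1 - t) * moreau lam g a + t * moreau lam g b"
    using t by (simp add: divide_le_eq algebra_simps)
qed auto

lemma norm_vec_le_sqrt_card:
  fixes x :: "real^'n"
  assumes "\<And>j. \<bar>x $ j\<bar> \<le> K"
  shows "norm x \<le> sqrt (real CARD('n)) * K"
proof -
  have K: "0 \<le> K" using assms[of undefined] by linarith
  have "norm x = sqrt (\<Sum>j\<in>UNIV. (x $ j)\<^sup>2)" by (simp add: norm_vec_def L2_set_def)
  also have "\<dots> \<le> sqrt (\<Sum>j\<in>(UNIV::'n set). K\<^sup>2)"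
    using assms K by (intro real_sqrt_le_mono sum_mono) (metis abs_le_square_iff abs_of_nonneg)
  also have "\<dots> = sqrt (real CARD('n)) * K" using K by (simp add: real_sqrt_mult)
  finally show ?thesis .
qed

lemma hvec_nth [simp]: "hvec h w $ j = h j w"
  by (simp add: hvec_def)

lemma hlam_eq_hvec: "hlam lam h = hvec (\<lambda>j. moreau lam (h j))"
  by (simp add: hlam_def hvec_def fun_eq_iff)

lemma lipschitz_on_hvec:
  fixes h :: "'h::finite \<Rightarrow> 'c::real_normed_vector \<Rightarrow> real"
  assumes lip: "\<And>j. L-lipschitz_on UNIV (h j)"
  shows "(sqrt (real CARD('h)) * L)-lipschitz_on UNIV (hvec h)"
proof (rule lipschitz_onI)
  show "dist (hvec h a) (hvec h b) \<le> sqrt (real CARD('h)) * L * dist a b" for a b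
    unfolding dist_norm mult.assoc
    by (rule norm_vec_le_sqrt_card) (use lipschitz_on_normD[OF lip] in simp)
  show "0 \<le> sqrt (real CARD('h)) * L"
    using lipschitz_on_nonneg[OF lip[of undefined]] by simp
qed

lemma norm_hvec_minus_hlam_le:
  fixes h :: "'h::finite \<Rightarrow> 'c::real_normed_vector \<Rightarrow> real"
  assumes lip: "\<And>j. L-lipschitz_on UNIV (h j)" and lam: "0 < lam"
  shows "norm (hvec h w - hlam lam h w) \<le> sqrt (real CARD('h)) * (lam * L\<^sup>2 / 2)"
proof (rule norm_vec_le_sqrt_card)
  fix j
  show "\<bar>(hvec h w - hlam lam h w) $ j\<bar> \<le> lam * L\<^sup>2 / 2"
    using moreau_le_self[OF lip lam, of j w] moreau_ge[OF lip lam, of j w]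
    by (simp add: hlam_eq_hvec abs_le_iff)
qed

lemma monotone_weakly_convex_hvec_le:
  fixes H :: "'h::finite \<Rightarrow> 'c::real_normed_vector \<Rightarrow> real" and f :: "real^'h \<Rightarrow> real"
  assumes H_convex: "\<And>j. convex_on UNIV (H j)" and H_lip: "\<And>j. L-lipschitz_on UNIV (H j)"
    and f_mono: "\<And>u v. (\<forall>j. u $ j \<le> v $ j) \<Longrightarrow> f u \<le> f v"
    and f_lip: "K-lipschitz_on UNIV f" and f_wc: "weakly_convex_on \<rho> UNIV f"
    and t: "0 \<le> t" "t \<le> 1"
  shows "f (hvec H w0) \<le> t * f (hvec H w1) + (1 - t) * f (hvec H w2)
      + \<rho> / 2 * (t * (1 - t)) * (norm (hvec H w1 - hvec H w2))\<^sup>2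
      + K * sqrt (real CARD('h)) * L * norm (t *\<^sub>R w1 + (1 - t) *\<^sub>R w2 - w0)"
proof -
  define m where "m = norm (t *\<^sub>R w1 + (1 - t) *\<^sub>R w2 - w0)"
  define s :: "real^'h" where "s = (\<chi> j. L * m)"
  have L: "0 \<le> L" using lipschitz_on_nonneg[OF H_lip] by blast
  have K: "0 \<le> K" using lipschitz_on_nonneg[OF f_lip] .
  have "(hvec H w0 - s) $ j \<le> (t *\<^sub>R hvec H w1 + (1 - t) *\<^sub>R hvec H w2) $ j" for j
  proof -
    have "H j w0 - L * m \<le> H j (t *\<^sub>R w1 + (1 - t) *\<^sub>R w2)"
      using lipschitz_on_normD[OF H_lip[of j], of w0 "t *\<^sub>R w1 + (1 - t) *\<^sub>R w2"]
      by (simp add: m_def norm_minus_commute abs_le_iff)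
    also have "\<dots> \<le> t * H j w1 + (1 - t) * H j w2"
      using convex_onD[OF H_convex[of j], of t w2 w1] t by (simp add: add.commute)
    finally show ?thesis by (simp add: s_def)
  qed
  then have "f (hvec H w0 - s) \<le> f (t *\<^sub>R hvec H w1 + (1 - t) *\<^sub>R hvec H w2)"
    by (intro f_mono) blast
  also have "\<dots> \<le> t * f (hvec H w1) + (1 - t) * f (hvec H w2)
      + \<rho> / 2 * (t * (1 - t)) * (norm (hvec H w1 - hvec H w2))\<^sup>2"
    using weakly_convex_onD[OF f_wc _ _ t] by simp
  finally have "f (hvec H w0 - s) \<le> \<dots>" .
  moreover have "f (hvec H w0) - f (hvec H w0 - s) \<le> K * sqrt (real CARD('h)) * L * m"
  proof -
    have "norm s \<le> sqrt (real CARD('h)) * (L * m)"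
      using L by (intro norm_vec_le_sqrt_card) (simp add: s_def m_def)
    then have "K * norm s \<le> K * (sqrt (real CARD('h)) * (L * m))"
      using K by (rule mult_left_mono)
    moreover have "f (hvec H w0) - f (hvec H w0 - s) \<le> K * norm s"
      using lipschitz_on_normD[OF f_lip, of "hvec H w0" "hvec H w0 - s"] by simp
    ultimately show ?thesis by (simp add: mult_ac)
  qed
  ultimately show ?thesis by (simp add: m_def)
qed

section \<open>Measurability and differentiation under the integral\<close>

lemma borel_measurable_has_derivative_apply:
  fixes c :: "'x::euclidean_space \<Rightarrow> 'a \<Rightarrow> 'c::euclidean_space"
  assumes "\<And>x. c x \<in> borel_measurable M"
    and "\<And>\<xi>. \<xi> \<in> space M \<Longrightarrow> ((\<lambda>x. c x \<xi>) has_derivative D \<xi>) (at x0)"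
  shows "(\<lambda>\<xi>. D \<xi> v) \<in> borel_measurable M"
proof (rule borel_measurable_LIMSEQ_metric)
  show "(\<lambda>\<xi>. real (Suc n) *\<^sub>R (c (x0 + inverse (real (Suc n)) *\<^sub>R v) \<xi> - c x0 \<xi>)) \<in> borel_measurable M" for n
    using assms(1) by measurable
qed (rule has_derivative_difference_quotient_LIMSEQ[OF assms(2)])

lemma LIMSEQ_floor_mult_divide:
  fixes v :: real
  shows "(\<lambda>n. real_of_int \<lfloor>real (Suc n) * v\<rfloor> / real (Suc n)) \<longlonglongrightarrow> v"
proof (rule tendsto_sandwich[of "\<lambda>n. v - inverse (real (Suc n))" _ _ "\<lambda>n. v"])
  show "\<forall>\<^sub>F n in sequentially. v - inverse (real (Suc n)) \<le> real_of_int \<lfloor>real (Suc n) * v\<rfloor> / real (Suc n)"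
  proof (intro always_eventually allI)
    fix n
    have "real (Suc n) * v - 1 \<le> real_of_int \<lfloor>real (Suc n) * v\<rfloor>" by linarith
    moreover have "v - inverse (real (Suc n)) = (real (Suc n) * v - 1) / real (Suc n)"
      by (simp add: field_simps)
    ultimately show "v - inverse (real (Suc n)) \<le> real_of_int \<lfloor>real (Suc n) * v\<rfloor> / real (Suc n)"
      using divide_right_mono[of _ _ "real (Suc n)"] by simp
  qed
  show "\<forall>\<^sub>F n in sequentially. real_of_int \<lfloor>real (Suc n) * v\<rfloor> / real (Suc n) \<le> v"
    by (intro always_eventually allI) (simp add: field_simps)
  show "(\<lambda>n. v - inverse (real (Suc n))) \<longlonglongrightarrow> v"
    using tendsto_diff[OF tendsto_const LIMSEQ_inverse_real_of_nat, of v] by simp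
qed simp

text \<open>Approximate \<open>u\<close> by the countably-valued maps \<open>\<lfloor>n u\<rfloor> / n\<close>.\<close>

lemma borel_measurable_caratheodory:
  fixes phi :: "real^'h::finite \<Rightarrow> 'a \<Rightarrow> real" and u :: "'a \<Rightarrow> real^'h"
  assumes m: "\<And>v. phi v \<in> borel_measurable M"
    and cont: "\<And>\<xi>. \<xi> \<in> space M \<Longrightarrow> continuous_on UNIV (\<lambda>v. phi v \<xi>)"
    and u: "u \<in> borel_measurable M"
  shows "(\<lambda>\<xi>. phi (u \<xi>) \<xi>) \<in> borel_measurable M"
proof -
  define R :: "nat \<Rightarrow> 'a \<Rightarrow> 'h \<Rightarrow> int" where "R n \<xi> = (\<lambda>j. \<lfloor>real (Suc n) * u \<xi> $ j\<rfloor>)" for n \<xi>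
  define Q :: "nat \<Rightarrow> ('h \<Rightarrow> int) \<Rightarrow> real^'h" where "Q n a = (\<chi> j. real_of_int (a j) / real (Suc n))" for n a
  have R: "R n \<in> measurable M (count_space UNIV)" for n
  proof (subst measurable_count_space_eq2_countable, intro conjI ballI)
    fix a :: "'h \<Rightarrow> int"
    have "R n -` {a} \<inter> space M = {\<xi> \<in> space M. \<forall>j. real_of_int (a j) \<le> real (Suc n) * u \<xi> $ j
        \<and> real (Suc n) * u \<xi> $ j < real_of_int (a j) + 1}"
      unfolding R_def by (auto simp: fun_eq_iff floor_eq_iff)
    also have "\<dots> \<in> sets M" using u by measurable
    finally show "R n -` {a} \<inter> space M \<in> sets M" .
  qed simp
  show ?thesis
  proof (rule borel_measurable_LIMSEQ_metric)
    show "(\<lambda>\<xi>. phi (Q n (R n \<xi>)) \<xi>) \<in> borel_measurable M" for n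
      by (rule measurable_compose_countable[OF _ R]) (rule m)
    fix \<xi> assume \<xi>: "\<xi> \<in> space M"
    have "(\<lambda>n. Q n (R n \<xi>)) \<longlonglongrightarrow> u \<xi>"
      unfolding Q_def R_def by (intro vec_tendstoI) (simp only: vec_lambda_beta LIMSEQ_floor_mult_divide)
    then show "(\<lambda>n. phi (Q n (R n \<xi>)) \<xi>) \<longlonglongrightarrow> phi (u \<xi>) \<xi>"
      by (rule continuous_on_tendsto_compose[OF cont[OF \<xi>]]) auto
  qed
qed

lemma (in prob_space) integral_le_of_nn_integral_square_le:
  fixes f :: "'a \<Rightarrow> real"
  assumes "integrable M f" "integrable M (\<lambda>x. (f x)\<^sup>2)"
    and "(\<integral>\<^sup>+ x. ennreal ((f x)\<^sup>2) \<partial>M) \<le> ennreal (B\<^sup>2)"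
  shows "(\<integral>x. f x \<partial>M) \<le> \<bar>B\<bar>"
proof -
  have "(\<integral>x. (f x)\<^sup>2 \<partial>M) \<le> B\<^sup>2"
    using assms by (subst integral_eq_nn_integral) (auto intro: enn2real_leI)
  moreover have "(\<integral>x. f x \<partial>M)\<^sup>2 \<le> (\<integral>x. (f x)\<^sup>2 \<partial>M)"
    using variance_positive[of f] variance_eq[OF assms(1,2)] by simp
  ultimately show ?thesis
    by (metis abs_le_square_iff abs_ge_self order_trans)
qed

lemma (in finite_measure) has_field_derivative_integral:
  fixes G A :: "real \<Rightarrow> 'a \<Rightarrow> real"
  assumes G: "\<And>t. integrable M (G t)" and A: "A t \<in> borel_measurable M"
    and deriv: "\<And>\<xi>. \<xi> \<in> space M \<Longrightarrow> ((\<lambda>t. G t \<xi>) has_field_derivative A t \<xi>) (at t)"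
    and lip: "\<And>a b \<xi>. \<xi> \<in> space M \<Longrightarrow> \<bar>G a \<xi> - G b \<xi>\<bar> \<le> K * \<bar>a - b\<bar>"
  shows "((\<lambda>t. \<integral>\<xi>. G t \<xi> \<partial>M) has_field_derivative (\<integral>\<xi>. A t \<xi> \<partial>M)) (at t)"
  unfolding has_field_derivative_iff tendsto_at_iff_sequentially
proof (intro allI impI)
  fix s :: "nat \<Rightarrow> real" assume s: "\<forall>i. s i \<in> UNIV - {t}" "s \<longlonglongrightarrow> t"
  have "((\<lambda>y. ((\<integral>\<xi>. G y \<xi> \<partial>M) - (\<integral>\<xi>. G t \<xi> \<partial>M)) / (y - t)) \<circ> s)
      = (\<lambda>i. \<integral>\<xi>. (G (s i) \<xi> - G t \<xi>) / (s i - t) \<partial>M)"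
    using G by (simp add: o_def)
  also have "\<dots> \<longlonglongrightarrow> (\<integral>\<xi>. A t \<xi> \<partial>M)"
  proof (rule integral_dominated_convergence[where w="\<lambda>_. K"])
    show "(\<lambda>\<xi>. (G (s i) \<xi> - G t \<xi>) / (s i - t)) \<in> borel_measurable M" for i
      using G by measurable
    show "AE \<xi> in M. (\<lambda>i. (G (s i) \<xi> - G t \<xi>) / (s i - t)) \<longlonglongrightarrow> A t \<xi>"
    proof (rule AE_I2)
      fix \<xi> assume "\<xi> \<in> space M"
      with deriv have "((\<lambda>y. (G y \<xi> - G t \<xi>) / (y - t)) \<longlongrightarrow> A t \<xi>) (at t)"
        unfolding has_field_derivative_iff by blast
      with s show "(\<lambda>i. (G (s i) \<xi> - G t \<xi>) / (s i - t)) \<longlonglongrightarrow> A t \<xi>"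
        unfolding tendsto_at_iff_sequentially by (simp add: o_def)
    qed
    show "AE \<xi> in M. norm ((G (s i) \<xi> - G t \<xi>) / (s i - t)) \<le> K" for i
      using lip s(1) by (intro AE_I2) (simp add: divide_le_eq abs_divide)
  qed (use A in simp_all)
  finally show "((\<lambda>y. ((\<integral>\<xi>. G y \<xi> \<partial>M) - (\<integral>\<xi>. G t \<xi> \<partial>M)) / (y - t)) \<circ> s)
      \<longlonglongrightarrow> (\<integral>\<xi>. A t \<xi> \<partial>M)" .
qed

lemma (in prob_space) has_derivative_integral_grad:
  fixes g :: "'y::euclidean_space \<Rightarrow> 'a \<Rightarrow> real"
  assumes meas: "\<And>y. g y \<in> borel_measurable M" and int: "\<And>y. integrable M (g y)"
    and diff: "\<And>y \<xi>. \<xi> \<in> space M \<Longrightarrow> (\<lambda>y. g y \<xi>) differentiable (at y)"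
    and lip: "\<And>\<xi>. \<xi> \<in> space M \<Longrightarrow> K-lipschitz_on UNIV (\<lambda>y. g y \<xi>)"
    and grad_lip: "\<And>a b \<xi>. \<xi> \<in> space M \<Longrightarrow>
      norm (grad (\<lambda>y. g y \<xi>) a - grad (\<lambda>y. g y \<xi>) b) \<le> L * norm (a - b)"
  shows "integrable M (\<lambda>\<xi>. grad (\<lambda>y. g y \<xi>) y)"
    and "((\<lambda>y. \<integral>\<xi>. g y \<xi> \<partial>M) has_derivative (\<lambda>k. inner (\<integral>\<xi>. grad (\<lambda>y. g y \<xi>) y \<partial>M) k)) (at y)"
proof -
  define G where "G \<xi> = grad (\<lambda>y. g y \<xi>) y" for \<xi>
  have der: "((\<lambda>y. g y \<xi>) has_derivative (\<lambda>v. inner (grad (\<lambda>y. g y \<xi>) z) v)) (at z)"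
    if "\<xi> \<in> space M" for \<xi> z by (rule grad_has_derivative[OF diff[OF that]])
  have "(\<lambda>\<xi>. G \<xi> \<bullet> i) \<in> borel_measurable M" for i
  proof (rule borel_measurable_LIMSEQ_metric)
    show "(\<lambda>\<xi>. real (Suc n) *\<^sub>R (g (y + inverse (real (Suc n)) *\<^sub>R i) \<xi> - g y \<xi>)) \<in> borel_measurable M" for n
      using meas by measurable
    show "(\<lambda>n. real (Suc n) *\<^sub>R (g (y + inverse (real (Suc n)) *\<^sub>R i) \<xi> - g y \<xi>)) \<longlonglongrightarrow> G \<xi> \<bullet> i"
      if "\<xi> \<in> space M" for \<xi>
      unfolding G_def by (rule has_derivative_difference_quotient_LIMSEQ[OF der[OF that]])
  qed
  then have "G \<in> borel_measurable M" by (rule borel_measurable_euclidean_space[THEN iffD2, OF ballI])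
  moreover have "norm (G \<xi>) \<le> K" if "\<xi> \<in> space M" for \<xi>
    unfolding G_def by (rule norm_grad_le_lipschitz[OF diff[OF that] lip[OF that]])
  ultimately show Gi: "integrable M (\<lambda>\<xi>. grad (\<lambda>y. g y \<xi>) y)"
    unfolding G_def[symmetric] by (intro integrable_const_bound[where B=K]) auto
  show "((\<lambda>y. \<integral>\<xi>. g y \<xi> \<partial>M) has_derivative (\<lambda>k. inner (\<integral>\<xi>. grad (\<lambda>y. g y \<xi>) y \<partial>M) k)) (at y)"
    unfolding G_def[symmetric]
  proof (rule has_derivative_quadratic_remainderI[where C="L / 2"])
    fix k
    have rem: "\<bar>g (y + k) \<xi> - g y \<xi> - inner (G \<xi>) k\<bar> \<le> L / 2 * (norm k)\<^sup>2" if "\<xi> \<in> space M" for \<xi>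
      using lipschitz_gradient_remainder_bound[OF der[OF that] grad_lip[OF that], where a=y and b="y + k"]
      by (simp add: G_def)
    have "(\<integral>\<xi>. g (y + k) \<xi> \<partial>M) - (\<integral>\<xi>. g y \<xi> \<partial>M) - inner (\<integral>\<xi>. G \<xi> \<partial>M) k
        = (\<integral>\<xi>. g (y + k) \<xi> - g y \<xi> - inner (G \<xi>) k \<partial>M)"
      using int Gi unfolding G_def[symmetric] by simp
    also have "\<bar>\<dots>\<bar> \<le> (\<integral>\<xi>. \<bar>g (y + k) \<xi> - g y \<xi> - inner (G \<xi>) k\<bar> \<partial>M)"
      using integral_norm_bound[of M "\<lambda>\<xi>. g (y + k) \<xi> - g y \<xi> - inner (G \<xi>) k"] by simp
    also have "\<dots> \<le> L / 2 * (norm k)\<^sup>2"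
    proof (rule integral_le_const)
      show "integrable M (\<lambda>\<xi>. \<bar>g (y + k) \<xi> - g y \<xi> - inner (G \<xi>) k\<bar>)"
        using int Gi unfolding G_def[symmetric]
        by (intro integrable_abs Bochner_Integration.integrable_diff integrable_inner_left)
      show "AE \<xi> in M. \<bar>g (y + k) \<xi> - g y \<xi> - inner (G \<xi>) k\<bar> \<le> L / 2 * (norm k)\<^sup>2"
        using rem by (intro AE_I2)
    qed
    finally show "\<bar>(\<integral>\<xi>. g (y + k) \<xi> \<partial>M) - (\<integral>\<xi>. g y \<xi> \<partial>M) - inner (\<integral>\<xi>. G \<xi> \<partial>M) k\<bar>
        \<le> L / 2 * (norm k)\<^sup>2" .
  qed
qed

section \<open>Random maps with mean-square Lipschitz derivative\<close>

lemma abs_inner_le_norm_of_norm_le_1: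
  fixes u x :: "'a::real_inner"
  assumes "norm u \<le> 1"
  shows "\<bar>inner u x\<bar> \<le> norm x"
  using Cauchy_Schwarz_ineq2[of u x] mult_right_mono[OF assms norm_ge_zero[of x]] by simp

locale mean_square_smooth_map = prob_space M for M :: "'xi measure" +
  fixes c :: "'x::euclidean_space \<Rightarrow> 'xi \<Rightarrow> 'c::euclidean_space" and lc Lc :: real
  assumes c_measurable: "\<And>x. (\<lambda>\<xi>. c x \<xi>) \<in> borel_measurable M"
    and c_differentiable: "\<And>x \<xi>. \<xi> \<in> space M \<Longrightarrow> (\<lambda>x. c x \<xi>) differentiable (at x)"
    and c_lipschitz: "\<And>\<xi>. \<xi> \<in> space M \<Longrightarrow> lc-lipschitz_on UNIV (\<lambda>x. c x \<xi>)"
    and Dc_mean_square_lipschitz: "\<And>x1 x2. (\<integral>\<^sup>+ \<xi>. ennreal ((onorm (\<lambda>v. frechet_derivative (\<lambda>x. c x \<xi>) (at x1) v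
            - frechet_derivative (\<lambda>x. c x \<xi>) (at x2) v))\<^sup>2) \<partial>M) \<le> ennreal (Lc\<^sup>2 * (norm (x1 - x2))\<^sup>2)"
    and Lc_nonneg: "0 \<le> Lc"
begin

definition Dc :: "'x \<Rightarrow> 'xi \<Rightarrow> 'x \<Rightarrow> 'c" where
  "Dc x \<xi> = frechet_derivative (\<lambda>x. c x \<xi>) (at x)"

lemma has_derivative_Dc: "\<xi> \<in> space M \<Longrightarrow> ((\<lambda>x. c x \<xi>) has_derivative Dc x \<xi>) (at x)"
  unfolding Dc_def using c_differentiable frechet_derivative_works by blast

lemma linear_Dc: "\<xi> \<in> space M \<Longrightarrow> linear (Dc x \<xi>)"
  using has_derivative_Dc has_derivative_linear by blast

lemma borel_measurable_Dc: "(\<lambda>\<xi>. Dc x \<xi> v) \<in> borel_measurable M"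
  by (rule borel_measurable_has_derivative_apply[OF c_measurable has_derivative_Dc])

lemma lc_nonneg: "0 \<le> lc"
  using c_lipschitz lipschitz_on_nonneg some_in_eq not_empty by metis

lemma norm_c_diff_le: "\<xi> \<in> space M \<Longrightarrow> norm (c a \<xi> - c b \<xi>) \<le> lc * norm (a - b)"
  using lipschitz_on_normD[OF c_lipschitz] by simp

lemma norm_Dc_le: "\<xi> \<in> space M \<Longrightarrow> norm (Dc x \<xi> v) \<le> lc * norm v"
  by (rule has_derivative_norm_le_lipschitz[OF has_derivative_Dc c_lipschitz])

lemma integral_inner_Dc_diff_le:
  assumes w: "w \<in> borel_measurable M" "\<And>\<xi>. norm (w \<xi>) \<le> 1"
  shows "(\<integral>\<xi>. inner (w \<xi>) (Dc x1 \<xi> v - Dc x2 \<xi> v) \<partial>M) \<le> Lc * norm (x1 - x2) * norm v"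
proof (cases "v = 0")
  case True
  then have "(\<integral>\<xi>. inner (w \<xi>) (Dc x1 \<xi> v - Dc x2 \<xi> v) \<partial>M) = (\<integral>\<xi>. 0 \<partial>M)"
    by (intro Bochner_Integration.integral_cong) (simp_all add: linear_0 linear_Dc)
  with True show ?thesis by simp
next
  case False
  define i where "i \<xi> = inner (w \<xi>) (Dc x1 \<xi> v - Dc x2 \<xi> v)" for \<xi>
  define f where "f \<xi> = \<bar>i \<xi>\<bar> / norm v" for \<xi>
  have i_meas: "i \<in> borel_measurable M"
    unfolding i_def by (intro borel_measurable_inner borel_measurable_diff borel_measurable_Dc w(1))
  have i_bound: "\<bar>i \<xi>\<bar> \<le> 2 * lc * norm v" if "\<xi> \<in> space M" for \<xi>
  proof -
    have "\<bar>i \<xi>\<bar> \<le> norm (Dc x1 \<xi> v - Dc x2 \<xi> v)"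
      unfolding i_def by (rule abs_inner_le_norm_of_norm_le_1[OF w(2)])
    also have "\<dots> \<le> lc * norm v + lc * norm v"
      by (intro order_trans[OF norm_triangle_ineq4] add_mono norm_Dc_le that)
    finally show ?thesis by simp
  qed
  have i_int: "integrable M i"
    using i_meas i_bound by (intro integrable_const_bound[where B="2 * lc * norm v"]) auto
  have f_meas: "f \<in> borel_measurable M" unfolding f_def using i_meas by simp
  have f_bound: "\<bar>f \<xi>\<bar> \<le> 2 * lc" if "\<xi> \<in> space M" for \<xi>
    using i_bound[OF that] False by (simp add: f_def divide_le_eq)
  have f_int: "integrable M f"
    using f_meas f_bound by (intro integrable_const_bound[where B="2 * lc"]) auto
  have "(f \<xi>)\<^sup>2 \<le> (2 * lc)\<^sup>2" if "\<xi> \<in> space M" for \<xi>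
    using power_mono[OF f_bound[OF that] abs_ge_zero, of 2] by simp
  then have f2_int: "integrable M (\<lambda>\<xi>. (f \<xi>)\<^sup>2)"
    using f_meas by (intro integrable_const_bound[where B="(2 * lc)\<^sup>2"] AE_I2) auto
  have f_onorm: "f \<xi> \<le> onorm (\<lambda>v. Dc x1 \<xi> v - Dc x2 \<xi> v)" if "\<xi> \<in> space M" for \<xi>
  proof -
    have "bounded_linear (\<lambda>v. Dc x1 \<xi> v - Dc x2 \<xi> v)"
      using has_derivative_Dc[OF that] by (intro bounded_linear_sub) (auto dest: has_derivative_bounded_linear)
    from onorm[OF this, of v]
    have "\<bar>i \<xi>\<bar> \<le> onorm (\<lambda>v. Dc x1 \<xi> v - Dc x2 \<xi> v) * norm v"
      unfolding i_def by (rule order_trans[OF abs_inner_le_norm_of_norm_le_1[OF w(2)]])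
    with False show ?thesis by (simp add: f_def divide_le_eq)
  qed
  have "(\<integral>\<^sup>+ \<xi>. ennreal ((f \<xi>)\<^sup>2) \<partial>M) \<le> (\<integral>\<^sup>+ \<xi>. ennreal ((onorm (\<lambda>v. Dc x1 \<xi> v - Dc x2 \<xi> v))\<^sup>2) \<partial>M)"
    using f_onorm by (intro nn_integral_mono ennreal_leI power_mono) (auto simp: f_def)
  also have "\<dots> \<le> ennreal ((Lc * norm (x1 - x2))\<^sup>2)"
    using Dc_mean_square_lipschitz by (simp add: Dc_def power_mult_distrib)
  finally have "(\<integral>\<xi>. f \<xi> \<partial>M) \<le> \<bar>Lc * norm (x1 - x2)\<bar>"
    by (rule integral_le_of_nn_integral_square_le[OF f_int f2_int])
  then have "norm v * (\<integral>\<xi>. f \<xi> \<partial>M) \<le> norm v * (Lc * norm (x1 - x2))"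
    using Lc_nonneg by (intro mult_left_mono) auto
  moreover have "(\<integral>\<xi>. i \<xi> \<partial>M) \<le> (\<integral>\<xi>. norm v * f \<xi> \<partial>M)"
    using i_int f_int False by (intro integral_mono) (auto simp: f_def)
  ultimately show ?thesis unfolding i_def by (simp add: mult_ac)
qed

lemma has_field_derivative_inner_c_along_line:
  assumes "\<xi> \<in> space M"
  shows "((\<lambda>t. inner u (c (x + t *\<^sub>R v) \<xi> - c x \<xi>)) has_field_derivative inner u (Dc (x + t *\<^sub>R v) \<xi> v)) (at t)"
proof -
  have "((\<lambda>s. x + s *\<^sub>R v) has_derivative (\<lambda>s. s *\<^sub>R v)) (at t)"
    by (auto intro!: derivative_eq_intros)
  from has_derivative_compose[OF this has_derivative_Dc[OF assms]]
  have "((\<lambda>t. inner u (c (x + t *\<^sub>R v) \<xi> - c x \<xi>)) has_derivative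
      (\<lambda>s. inner u (Dc (x + t *\<^sub>R v) \<xi> (s *\<^sub>R v) - 0))) (at t)"
    by (intro has_derivative_inner_right has_derivative_diff has_derivative_const) (simp add: o_def)
  moreover have "(\<lambda>s. inner u (Dc (x + t *\<^sub>R v) \<xi> (s *\<^sub>R v) - 0)) = (*) (inner u (Dc (x + t *\<^sub>R v) \<xi> v))"
    using linear_scale[OF linear_Dc[OF assms]] by (auto simp: fun_eq_iff mult.commute)
  ultimately show ?thesis unfolding has_field_derivative_def by simp
qed

lemma has_real_derivative_integral_inner_c_along_line:
  assumes w_meas: "w \<in> borel_measurable M" and w_norm: "\<And>\<xi>. norm (w \<xi>) \<le> 1"
  shows "integrable M (\<lambda>\<xi>. inner (w \<xi>) (c (x + t *\<^sub>R v) \<xi> - c x \<xi>))"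
    and "integrable M (\<lambda>\<xi>. inner (w \<xi>) (Dc (x + t *\<^sub>R v) \<xi> v))"
    and "((\<lambda>t. \<integral>\<xi>. inner (w \<xi>) (c (x + t *\<^sub>R v) \<xi> - c x \<xi>) \<partial>M) has_real_derivative
          (\<integral>\<xi>. inner (w \<xi>) (Dc (x + t *\<^sub>R v) \<xi> v) \<partial>M)) (at t)"
proof -
  define G where "G t \<xi> = inner (w \<xi>) (c (x + t *\<^sub>R v) \<xi> - c x \<xi>)" for t \<xi>
  define A where "A t \<xi> = inner (w \<xi>) (Dc (x + t *\<^sub>R v) \<xi> v)" for t \<xi>
  have G_lip: "\<bar>G a \<xi> - G b \<xi>\<bar> \<le> lc * norm v * \<bar>a - b\<bar>" if "\<xi> \<in> space M" for a b \<xi>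
  proof -
    have "\<bar>G a \<xi> - G b \<xi>\<bar> \<le> norm (c (x + a *\<^sub>R v) \<xi> - c (x + b *\<^sub>R v) \<xi>)"
      unfolding G_def inner_diff_right[symmetric] by (simp add: abs_inner_le_norm_of_norm_le_1[OF w_norm])
    also have "\<dots> \<le> lc * norm ((x + a *\<^sub>R v) - (x + b *\<^sub>R v))"
      by (rule norm_c_diff_le[OF that])
    also have "(x + a *\<^sub>R v) - (x + b *\<^sub>R v) = (a - b) *\<^sub>R v"
      by (simp add: algebra_simps)
    finally show ?thesis by (simp add: mult_ac)
  qed
  have G_int: "integrable M (G t)" for t
  proof (rule integrable_const_bound[where B="lc * norm v * \<bar>t\<bar>"])
    show "AE \<xi> in M. norm (G t \<xi>) \<le> lc * norm v * \<bar>t\<bar>"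
      using G_lip[of _ t 0] by (intro AE_I2) (simp add: G_def)
    show "G t \<in> borel_measurable M"
      unfolding G_def by (intro borel_measurable_inner w_meas borel_measurable_diff c_measurable)
  qed
  have A_meas: "A t \<in> borel_measurable M" for t
    unfolding A_def by (intro borel_measurable_inner w_meas borel_measurable_Dc)
  have A_int: "integrable M (A t)" for t
  proof (rule integrable_const_bound[where B="lc * norm v"])
    show "AE \<xi> in M. norm (A t \<xi>) \<le> lc * norm v"
      unfolding A_def
      by (intro AE_I2) (simp add: order_trans[OF abs_inner_le_norm_of_norm_le_1[OF w_norm] norm_Dc_le])
  qed (rule A_meas)
  show "integrable M (\<lambda>\<xi>. inner (w \<xi>) (c (x + t *\<^sub>R v) \<xi> - c x \<xi>))"
    using G_int[of t] unfolding G_def .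
  show "integrable M (\<lambda>\<xi>. inner (w \<xi>) (Dc (x + t *\<^sub>R v) \<xi> v))"
    using A_int[of t] unfolding A_def .
  show "((\<lambda>t. \<integral>\<xi>. inner (w \<xi>) (c (x + t *\<^sub>R v) \<xi> - c x \<xi>) \<partial>M) has_real_derivative
      (\<integral>\<xi>. inner (w \<xi>) (Dc (x + t *\<^sub>R v) \<xi> v) \<partial>M)) (at t)"
  proof -
    have "((\<lambda>t. \<integral>\<xi>. G t \<xi> \<partial>M) has_real_derivative (\<integral>\<xi>. A t \<xi> \<partial>M)) (at t)"
      by (rule has_field_derivative_integral[OF G_int A_meas _ G_lip])
         (simp add: G_def A_def has_field_derivative_inner_c_along_line)
    then show ?thesis by (simp add: G_def A_def)
  qed
qed

lemma integrable_linearisation_error: "integrable M (\<lambda>\<xi>. norm (c x1 \<xi> - c x0 \<xi> - Dc x0 \<xi> (x1 - x0)))"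
proof (rule integrable_const_bound[where B="2 * lc * norm (x1 - x0)"])
  show "AE \<xi> in M. norm (norm (c x1 \<xi> - c x0 \<xi> - Dc x0 \<xi> (x1 - x0))) \<le> 2 * lc * norm (x1 - x0)"
  proof (rule AE_I2)
    fix \<xi> assume "\<xi> \<in> space M"
    then have "norm (c x1 \<xi> - c x0 \<xi> - Dc x0 \<xi> (x1 - x0)) \<le> lc * norm (x1 - x0) + lc * norm (x1 - x0)"
      by (intro order_trans[OF norm_triangle_ineq4] add_mono norm_c_diff_le norm_Dc_le)
    then show "norm (norm (c x1 \<xi> - c x0 \<xi> - Dc x0 \<xi> (x1 - x0))) \<le> 2 * lc * norm (x1 - x0)" by simp
  qed
qed (intro measurable_compose[OF _ borel_measurable_norm] borel_measurable_diff c_measurable borel_measurable_Dc)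

text \<open>Testing the error \<open>e\<close> against its direction \<open>sgn e\<close> turns it into a scalar function
  of the step length whose derivative grows at most linearly in mean.\<close>

lemma integral_linearisation_error_le:
  "(\<integral>\<xi>. norm (c x1 \<xi> - c x0 \<xi> - Dc x0 \<xi> (x1 - x0)) \<partial>M) \<le> Lc / 2 * (norm (x1 - x0))\<^sup>2"
proof -
  define v where "v = x1 - x0"
  define e where "e \<xi> = c x1 \<xi> - c x0 \<xi> - Dc x0 \<xi> v" for \<xi>
  define w where "w \<xi> = sgn (e \<xi>)" for \<xi>
  have w_meas: "w \<in> borel_measurable M"
    unfolding w_def e_def by (intro measurable_compose[OF _ borel_measurable_sgn] borel_measurable_diff
        c_measurable borel_measurable_Dc)
  have w_norm: "norm (w \<xi>) \<le> 1" for \<xi> by (simp add: w_def norm_sgn)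
  note line = has_real_derivative_integral_inner_c_along_line[OF w_meas w_norm, where x = x0 and v = v]
  define \<psi> where "\<psi> t = (\<integral>\<xi>. inner (w \<xi>) (c (x0 + t *\<^sub>R v) \<xi> - c x0 \<xi>) \<partial>M)" for t
  define a where "a t = (\<integral>\<xi>. inner (w \<xi>) (Dc (x0 + t *\<^sub>R v) \<xi> v) \<partial>M)" for t
  have "(\<psi> has_real_derivative a s) (at s)" for s
    unfolding \<psi>_def a_def by (rule line(3))
  moreover have "a s - a 0 \<le> Lc * (norm v)\<^sup>2 * s" if "0 \<le> s" for s
  proof -
    have "a s - a 0 = (\<integral>\<xi>. inner (w \<xi>) (Dc (x0 + s *\<^sub>R v) \<xi> v - Dc x0 \<xi> v) \<partial>M)"
      using line(2)[of s] line(2)[of 0] by (simp add: a_def inner_diff_right)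
    also have "\<dots> \<le> Lc * norm (s *\<^sub>R v) * norm v"
      using integral_inner_Dc_diff_le[OF w_meas w_norm, of "x0 + s *\<^sub>R v" v x0] by simp
    finally show ?thesis using that by (simp add: power2_eq_square mult_ac)
  qed
  ultimately have "\<psi> 1 - \<psi> 0 - a 0 \<le> Lc * (norm v)\<^sup>2 / 2"
    by (intro DERIV_increment_le) auto
  moreover have "\<psi> 0 = 0" by (simp add: \<psi>_def)
  moreover have "\<psi> 1 - a 0 = (\<integral>\<xi>. norm (e \<xi>) \<partial>M)"
  proof -
    have "inner (w \<xi>) (e \<xi>) = norm (e \<xi>)" for \<xi>
      by (cases "e \<xi> = 0") (simp_all add: w_def sgn_div_norm power2_norm_eq_inner[symmetric] power2_eq_square)
    then have "inner (w \<xi>) (c (x0 + v) \<xi> - c x0 \<xi>) - inner (w \<xi>) (Dc x0 \<xi> v) = norm (e \<xi>)" for \<xi>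
      by (simp add: e_def v_def inner_diff_right)
    moreover have "integrable M (\<lambda>\<xi>. inner (w \<xi>) (c (x0 + v) \<xi> - c x0 \<xi>))"
      and "integrable M (\<lambda>\<xi>. inner (w \<xi>) (Dc x0 \<xi> v))"
      using line(1)[of 1] line(2)[of 0] by simp_all
    ultimately show ?thesis
      by (simp add: \<psi>_def a_def Bochner_Integration.integral_diff[symmetric])
  qed
  ultimately show ?thesis by (simp add: e_def v_def)
qed

lemma norm_convex_combination_c_le:
  assumes "\<xi> \<in> space M" and x0: "x0 = t *\<^sub>R x1 + (1 - t) *\<^sub>R x2" and t: "0 \<le> t" "t \<le> 1"
  shows "norm (t *\<^sub>R c x1 \<xi> + (1 - t) *\<^sub>R c x2 \<xi> - c x0 \<xi>)
    \<le> t * norm (c x1 \<xi> - c x0 \<xi> - Dc x0 \<xi> (x1 - x0)) + (1 - t) * norm (c x2 \<xi> - c x0 \<xi> - Dc x0 \<xi> (x2 - x0))"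
proof -
  have lin: "linear (Dc x0 \<xi>)" by (rule linear_Dc[OF assms(1)])
  have "t *\<^sub>R Dc x0 \<xi> (x1 - x0) + (1 - t) *\<^sub>R Dc x0 \<xi> (x2 - x0)
      = Dc x0 \<xi> (t *\<^sub>R (x1 - x0) + (1 - t) *\<^sub>R (x2 - x0))"
    by (simp add: linear_add[OF lin] linear_scale[OF lin])
  also have "t *\<^sub>R (x1 - x0) + (1 - t) *\<^sub>R (x2 - x0) = 0" by (simp add: x0 algebra_simps)
  finally have "t *\<^sub>R Dc x0 \<xi> (x1 - x0) + (1 - t) *\<^sub>R Dc x0 \<xi> (x2 - x0) = 0"
    by (simp add: linear_0[OF lin])
  then have "t *\<^sub>R c x1 \<xi> + (1 - t) *\<^sub>R c x2 \<xi> - c x0 \<xi>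
      = t *\<^sub>R (c x1 \<xi> - c x0 \<xi> - Dc x0 \<xi> (x1 - x0)) + (1 - t) *\<^sub>R (c x2 \<xi> - c x0 \<xi> - Dc x0 \<xi> (x2 - x0))"
    by (simp add: algebra_simps)
  also have "norm \<dots> \<le> t * norm (c x1 \<xi> - c x0 \<xi> - Dc x0 \<xi> (x1 - x0)) + (1 - t) * norm (c x2 \<xi> - c x0 \<xi> - Dc x0 \<xi> (x2 - x0))"
    using t by (intro order_trans[OF norm_triangle_ineq]) simp
  finally show ?thesis .
qed

end

section \<open>The composite objective\<close>

locale composite_integrand = mean_square_smooth_map M c lc Lc
  for M :: "'xi measure" and c :: "'x::euclidean_space \<Rightarrow> 'xi \<Rightarrow> 'c::euclidean_space" and lc Lc +
  fixes phi :: "real^'h::finite \<Rightarrow> 'y::euclidean_space \<Rightarrow> 'xi \<Rightarrow> real" and lphi Lphi :: real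
  assumes phi_measurable: "\<And>u y. (\<lambda>\<xi>. phi u y \<xi>) \<in> borel_measurable M"
    and phi_differentiable: "\<And>p \<xi>. \<xi> \<in> space M \<Longrightarrow> (\<lambda>(u, y). phi u y \<xi>) differentiable (at p)"
    and phi_mono: "\<And>u1 u2 y \<xi>. \<xi> \<in> space M \<Longrightarrow> (\<forall>j. u1 $ j \<le> u2 $ j) \<Longrightarrow> phi u1 y \<xi> \<le> phi u2 y \<xi>"
    and phi_lipschitz: "\<And>\<xi>. \<xi> \<in> space M \<Longrightarrow> lphi-lipschitz_on UNIV (\<lambda>(u, y). phi u y \<xi>)"
    and Lphi_nonneg: "0 \<le> Lphi"
    and D1phi_lipschitz: "\<And>u1 u2 y1 y2 \<xi>. \<xi> \<in> space M \<Longrightarrow>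
          (norm (grad (\<lambda>u. phi u y1 \<xi>) u1 - grad (\<lambda>u. phi u y2 \<xi>) u2))\<^sup>2
            \<le> Lphi\<^sup>2 * ((norm (u1 - u2))\<^sup>2 + (norm (y1 - y2))\<^sup>2)"
    and Dyphi_lipschitz: "\<And>u1 u2 y1 y2 \<xi>. \<xi> \<in> space M \<Longrightarrow>
          (norm (grad (\<lambda>y. phi u1 y \<xi>) y1 - grad (\<lambda>y. phi u2 y \<xi>) y2))\<^sup>2
            \<le> Lphi\<^sup>2 * ((norm (u1 - u2))\<^sup>2 + (norm (y1 - y2))\<^sup>2)"
begin

lemma lphi_nonneg: "0 \<le> lphi"
  using phi_lipschitz lipschitz_on_nonneg some_in_eq not_empty by metis

lemma phi_lipschitz_u: "\<xi> \<in> space M \<Longrightarrow> lphi-lipschitz_on UNIV (\<lambda>u. phi u y \<xi>)"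
  by (rule lipschitz_onI, use lipschitz_onD[OF phi_lipschitz, of \<xi> "(_, y)" "(_, y)"] in
      \<open>simp_all add: dist_Pair_Pair lphi_nonneg\<close>)

lemma phi_lipschitz_y: "\<xi> \<in> space M \<Longrightarrow> lphi-lipschitz_on UNIV (\<lambda>y. phi u y \<xi>)"
  by (rule lipschitz_onI, use lipschitz_onD[OF phi_lipschitz, of \<xi> "(u, _)" "(u, _)"] in
      \<open>simp_all add: dist_Pair_Pair lphi_nonneg\<close>)

lemma phi_differentiable_u:
  assumes "\<xi> \<in> space M" shows "(\<lambda>u. phi u y \<xi>) differentiable (at u)"
proof -
  have "(\<lambda>u. (u, y)) differentiable (at u)" by (auto intro!: derivative_eq_intros simp: differentiable_def)
  from differentiable_chain_at[OF this phi_differentiable[OF assms]] show ?thesis by (simp add: o_def)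
qed

lemma phi_differentiable_y:
  assumes "\<xi> \<in> space M" shows "(\<lambda>y. phi u y \<xi>) differentiable (at y)"
proof -
  have "(\<lambda>y. (u, y)) differentiable (at y)" by (auto intro!: derivative_eq_intros simp: differentiable_def)
  from differentiable_chain_at[OF this phi_differentiable[OF assms]] show ?thesis by (simp add: o_def)
qed

lemma norm_grad_u_diff_le:
  assumes "\<xi> \<in> space M"
  shows "norm (grad (\<lambda>u. phi u y \<xi>) a - grad (\<lambda>u. phi u y \<xi>) b) \<le> Lphi * norm (a - b)"
proof (rule power2_le_imp_le)
  show "(norm (grad (\<lambda>u. phi u y \<xi>) a - grad (\<lambda>u. phi u y \<xi>) b))\<^sup>2 \<le> (Lphi * norm (a - b))\<^sup>2"
    using D1phi_lipschitz[OF assms, of y a y b] by (simp add: power_mult_distrib)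
qed (simp add: Lphi_nonneg)

lemma norm_grad_y_diff_le:
  assumes "\<xi> \<in> space M"
  shows "norm (grad (\<lambda>y. phi u y \<xi>) a - grad (\<lambda>y. phi u y \<xi>) b) \<le> Lphi * norm (a - b)"
proof (rule power2_le_imp_le)
  show "(norm (grad (\<lambda>y. phi u y \<xi>) a - grad (\<lambda>y. phi u y \<xi>) b))\<^sup>2 \<le> (Lphi * norm (a - b))\<^sup>2"
    using Dyphi_lipschitz[OF assms, of u a u b] by (simp add: power_mult_distrib)
qed (simp add: Lphi_nonneg)

lemma norm_grad_y_diff_le_u:
  assumes "\<xi> \<in> space M"
  shows "norm (grad (\<lambda>y. phi u1 y \<xi>) y - grad (\<lambda>y. phi u2 y \<xi>) y) \<le> Lphi * norm (u1 - u2)"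
proof (rule power2_le_imp_le)
  show "(norm (grad (\<lambda>y. phi u1 y \<xi>) y - grad (\<lambda>y. phi u2 y \<xi>) y))\<^sup>2 \<le> (Lphi * norm (u1 - u2))\<^sup>2"
    using Dyphi_lipschitz[OF assms, of u1 y u2 y] by (simp add: power_mult_distrib)
qed (simp add: Lphi_nonneg)

lemma weakly_convex_phi_u: "\<xi> \<in> space M \<Longrightarrow> weakly_convex_on Lphi UNIV (\<lambda>u. phi u y \<xi>)"
  by (rule lipschitz_gradient_imp_weakly_convex[OF grad_has_derivative[OF phi_differentiable_u]
        norm_grad_u_diff_le])

lemma borel_measurable_phi_comp:
  "u \<in> borel_measurable M \<Longrightarrow> (\<lambda>\<xi>. phi (u \<xi>) y \<xi>) \<in> borel_measurable M"
  by (rule borel_measurable_caratheodory[where phi="\<lambda>v \<xi>. phi v y \<xi>", OF phi_measurable _ ])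
     (rule lipschitz_on_continuous_on[OF phi_lipschitz_u])

lemma integrable_phi_comp:
  assumes u: "u \<in> borel_measurable M" and v: "v \<in> borel_measurable M"
    and int: "integrable M (\<lambda>\<xi>. phi (v \<xi>) y \<xi>)"
    and close: "\<And>\<xi>. \<xi> \<in> space M \<Longrightarrow> norm (u \<xi> - v \<xi>) \<le> K"
  shows "integrable M (\<lambda>\<xi>. phi (u \<xi>) y \<xi>)"
proof -
  have "integrable M (\<lambda>\<xi>. (phi (u \<xi>) y \<xi> - phi (v \<xi>) y \<xi>) + phi (v \<xi>) y \<xi>)"
  proof (intro Bochner_Integration.integrable_add int integrable_const_bound[where B="lphi * K"] AE_I2)
    fix \<xi> assume \<xi>: "\<xi> \<in> space M"
    have "\<bar>phi (u \<xi>) y \<xi> - phi (v \<xi>) y \<xi>\<bar> \<le> lphi * norm (u \<xi> - v \<xi>)"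
      using lipschitz_on_normD[OF phi_lipschitz_u[OF \<xi>]] by simp
    also have "\<dots> \<le> lphi * K" by (rule mult_left_mono[OF close[OF \<xi>] lphi_nonneg])
    finally show "norm (phi (u \<xi>) y \<xi> - phi (v \<xi>) y \<xi>) \<le> lphi * K" by simp
  qed (intro borel_measurable_diff borel_measurable_phi_comp u v)
  then show ?thesis by simp
qed

end

locale composite_objective = composite_integrand M c lc Lc phi lphi Lphi
  for M :: "'xi measure" and c :: "'x::euclidean_space \<Rightarrow> 'xi \<Rightarrow> 'c::euclidean_space" and lc Lc
    and phi :: "real^'h::finite \<Rightarrow> 'y::euclidean_space \<Rightarrow> 'xi \<Rightarrow> real" and lphi Lphi +
  fixes H :: "'h \<Rightarrow> 'c \<Rightarrow> real" and lH :: real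
  assumes H_convex: "\<And>j. convex_on UNIV (H j)"
    and H_lipschitz: "\<And>j. lH-lipschitz_on UNIV (H j)"
    and integrable_phi_H: "\<And>x y. integrable M (\<lambda>\<xi>. phi (hvec H (c x \<xi>)) y \<xi>)"
begin

definition rho :: real where
  "rho = real CARD('h) * Lphi * lH\<^sup>2 * lc\<^sup>2 + Lc * lphi * lH * sqrt (real CARD('h))"

lemma lH_nonneg: "0 \<le> lH"
  using H_lipschitz lipschitz_on_nonneg by blast

lemma norm_hvec_H_c_diff_le:
  assumes "\<xi> \<in> space M"
  shows "norm (hvec H (c a \<xi>) - hvec H (c b \<xi>)) \<le> sqrt (real CARD('h)) * lH * lc * norm (a - b)"
proof -
  have "norm (hvec H (c a \<xi>) - hvec H (c b \<xi>)) \<le> sqrt (real CARD('h)) * lH * norm (c a \<xi> - c b \<xi>)"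
    using lipschitz_on_normD[OF lipschitz_on_hvec[OF H_lipschitz]] by simp
  also have "\<dots> \<le> sqrt (real CARD('h)) * lH * (lc * norm (a - b))"
    using norm_c_diff_le[OF assms] lH_nonneg by (intro mult_left_mono) auto
  finally show ?thesis by (simp add: mult_ac)
qed

lemma borel_measurable_hvec_H_c: "(\<lambda>\<xi>. hvec H (c x \<xi>)) \<in> borel_measurable M"
  using lipschitz_on_continuous_on[OF lipschitz_on_hvec[OF H_lipschitz]]
  by (intro measurable_compose[OF c_measurable] borel_measurable_continuous_onI)

lemma lipschitz_Fobj: "(lphi * sqrt (real CARD('h)) * lH * lc)-lipschitz_on UNIV (\<lambda>x. Fobj M phi H c x y)"
proof (rule lipschitz_onI)
  fix a b :: 'x
  have "\<bar>phi (hvec H (c a \<xi>)) y \<xi> - phi (hvec H (c b \<xi>)) y \<xi>\<bar> \<le> lphi * sqrt (real CARD('h)) * lH * lc * norm (a - b)"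
    if "\<xi> \<in> space M" for \<xi>
  proof -
    have "\<bar>phi (hvec H (c a \<xi>)) y \<xi> - phi (hvec H (c b \<xi>)) y \<xi>\<bar> \<le> lphi * norm (hvec H (c a \<xi>) - hvec H (c b \<xi>))"
      using lipschitz_on_normD[OF phi_lipschitz_u[OF that]] by simp
    also have "\<dots> \<le> lphi * (sqrt (real CARD('h)) * lH * lc * norm (a - b))"
      by (rule mult_left_mono[OF norm_hvec_H_c_diff_le[OF that] lphi_nonneg])
    finally show ?thesis by (simp add: mult_ac)
  qed
  then have "(\<integral>\<xi>. \<bar>phi (hvec H (c a \<xi>)) y \<xi> - phi (hvec H (c b \<xi>)) y \<xi>\<bar> \<partial>M)
      \<le> lphi * sqrt (real CARD('h)) * lH * lc * norm (a - b)"
    by (intro integral_le_const AE_I2 integrable_abs Bochner_Integration.integrable_diff integrable_phi_H)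
  moreover have "\<bar>Fobj M phi H c a y - Fobj M phi H c b y\<bar>
      \<le> (\<integral>\<xi>. \<bar>phi (hvec H (c a \<xi>)) y \<xi> - phi (hvec H (c b \<xi>)) y \<xi>\<bar> \<partial>M)"
    using integral_norm_bound[of M "\<lambda>\<xi>. phi (hvec H (c a \<xi>)) y \<xi> - phi (hvec H (c b \<xi>)) y \<xi>"]
    by (simp add: Fobj_def integrable_phi_H)
  ultimately show "dist (Fobj M phi H c a y) (Fobj M phi H c b y) \<le> lphi * sqrt (real CARD('h)) * lH * lc * dist a b"
    unfolding dist_real_def dist_norm by linarith
qed (use lphi_nonneg lH_nonneg lc_nonneg in simp)

lemma phi_H_c_convex_combination_le:
  assumes \<xi>: "\<xi> \<in> space M" and t: "0 \<le> t" "t \<le> 1" and x0: "x0 = t *\<^sub>R x1 + (1 - t) *\<^sub>R x2"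
  shows "phi (hvec H (c x0 \<xi>)) y \<xi> \<le> t * phi (hvec H (c x1 \<xi>)) y \<xi> + (1 - t) * phi (hvec H (c x2 \<xi>)) y \<xi>
      + Lphi / 2 * (t * (1 - t)) * (real CARD('h) * lH\<^sup>2 * lc\<^sup>2 * (norm (x1 - x2))\<^sup>2)
      + lphi * sqrt (real CARD('h)) * lH * (t * norm (c x1 \<xi> - c x0 \<xi> - Dc x0 \<xi> (x1 - x0))
          + (1 - t) * norm (c x2 \<xi> - c x0 \<xi> - Dc x0 \<xi> (x2 - x0)))"
proof -
  have "phi (hvec H (c x0 \<xi>)) y \<xi> \<le> t * phi (hvec H (c x1 \<xi>)) y \<xi> + (1 - t) * phi (hvec H (c x2 \<xi>)) y \<xi>
      + Lphi / 2 * (t * (1 - t)) * (norm (hvec H (c x1 \<xi>) - hvec H (c x2 \<xi>)))\<^sup>2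
      + lphi * sqrt (real CARD('h)) * lH * norm (t *\<^sub>R c x1 \<xi> + (1 - t) *\<^sub>R c x2 \<xi> - c x0 \<xi>)"
    by (rule monotone_weakly_convex_hvec_le[where f = "\<lambda>u. phi u y \<xi>", OF H_convex H_lipschitz _
          phi_lipschitz_u[OF \<xi>] weakly_convex_phi_u[OF \<xi>] t])
       (rule phi_mono[OF \<xi>])
  moreover have "(norm (hvec H (c x1 \<xi>) - hvec H (c x2 \<xi>)))\<^sup>2 \<le> real CARD('h) * lH\<^sup>2 * lc\<^sup>2 * (norm (x1 - x2))\<^sup>2"
    using power_mono[OF norm_hvec_H_c_diff_le[OF \<xi>, of x1 x2] norm_ge_zero, of 2]
    by (simp add: power_mult_distrib)
  then have "Lphi / 2 * (t * (1 - t)) * (norm (hvec H (c x1 \<xi>) - hvec H (c x2 \<xi>)))\<^sup>2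
      \<le> Lphi / 2 * (t * (1 - t)) * (real CARD('h) * lH\<^sup>2 * lc\<^sup>2 * (norm (x1 - x2))\<^sup>2)"
    using t Lphi_nonneg by (intro mult_left_mono) auto
  moreover have "norm (t *\<^sub>R c x1 \<xi> + (1 - t) *\<^sub>R c x2 \<xi> - c x0 \<xi>)
      \<le> t * norm (c x1 \<xi> - c x0 \<xi> - Dc x0 \<xi> (x1 - x0)) + (1 - t) * norm (c x2 \<xi> - c x0 \<xi> - Dc x0 \<xi> (x2 - x0))"
    by (rule norm_convex_combination_c_le[OF \<xi> x0 t])
  then have "lphi * sqrt (real CARD('h)) * lH * norm (t *\<^sub>R c x1 \<xi> + (1 - t) *\<^sub>R c x2 \<xi> - c x0 \<xi>)
      \<le> lphi * sqrt (real CARD('h)) * lH * (t * norm (c x1 \<xi> - c x0 \<xi> - Dc x0 \<xi> (x1 - x0))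
          + (1 - t) * norm (c x2 \<xi> - c x0 \<xi> - Dc x0 \<xi> (x2 - x0)))"
    using lphi_nonneg lH_nonneg by (intro mult_left_mono) auto
  ultimately show ?thesis by linarith
qed

lemma weakly_convex_Fobj: "weakly_convex_on rho UNIV (\<lambda>x. Fobj M phi H c x y)"
proof (rule weakly_convex_onI)
  fix x1 x2 :: 'x and t :: real assume t: "0 \<le> t" "t \<le> 1"
  define x0 where "x0 = t *\<^sub>R x1 + (1 - t) *\<^sub>R x2"
  define E1 where "E1 \<xi> = norm (c x1 \<xi> - c x0 \<xi> - Dc x0 \<xi> (x1 - x0))" for \<xi>
  define E2 where "E2 \<xi> = norm (c x2 \<xi> - c x0 \<xi> - Dc x0 \<xi> (x2 - x0))" for \<xi>
  define C where "C = Lphi / 2 * (t * (1 - t)) * (real CARD('h) * lH\<^sup>2 * lc\<^sup>2 * (norm (x1 - x2))\<^sup>2)"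
  define K where "K = lphi * sqrt (real CARD('h)) * lH"
  have E: "integrable M E1" "integrable M E2"
    "(\<integral>\<xi>. E1 \<xi> \<partial>M) \<le> Lc / 2 * (norm (x1 - x0))\<^sup>2" "(\<integral>\<xi>. E2 \<xi> \<partial>M) \<le> Lc / 2 * (norm (x2 - x0))\<^sup>2"
    unfolding E1_def E2_def by (rule integrable_linearisation_error integral_linearisation_error_le)+
  have "Fobj M phi H c x0 y
      \<le> (\<integral>\<xi>. t * phi (hvec H (c x1 \<xi>)) y \<xi> + (1 - t) * phi (hvec H (c x2 \<xi>)) y \<xi> + C
          + K * (t * E1 \<xi> + (1 - t) * E2 \<xi>) \<partial>M)"
    unfolding Fobj_def using E(1,2)
    by (intro integral_mono integrable_phi_H Bochner_Integration.integrable_add integrable_mult_right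
        integrable_const phi_H_c_convex_combination_le[OF _ t x0_def, unfolded C_def[symmetric] K_def[symmetric]
          E1_def[symmetric] E2_def[symmetric]])
  also have "\<dots> = t * Fobj M phi H c x1 y + (1 - t) * Fobj M phi H c x2 y + C
      + K * (t * (\<integral>\<xi>. E1 \<xi> \<partial>M) + (1 - t) * (\<integral>\<xi>. E2 \<xi> \<partial>M))"
    using E(1,2) integrable_phi_H prob_space by (simp add: Fobj_def)
  also have "\<dots> \<le> t * Fobj M phi H c x1 y + (1 - t) * Fobj M phi H c x2 y + C
      + K * (t * (Lc / 2 * (norm (x1 - x0))\<^sup>2) + (1 - t) * (Lc / 2 * (norm (x2 - x0))\<^sup>2))"
    using E(3,4) t lphi_nonneg lH_nonneg
    by (intro add_left_mono mult_left_mono add_mono) (auto simp: K_def)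
  also have "\<dots> = t * Fobj M phi H c x1 y + (1 - t) * Fobj M phi H c x2 y + rho / 2 * (t * (1 - t)) * (norm (x1 - x2))\<^sup>2"
  proof -
    have "x1 - x0 = (1 - t) *\<^sub>R (x1 - x2)" "x2 - x0 = (- t) *\<^sub>R (x1 - x2)"
      by (simp_all add: x0_def algebra_simps)
    then have n: "(norm (x1 - x0))\<^sup>2 = (1 - t)\<^sup>2 * (norm (x1 - x2))\<^sup>2" "(norm (x2 - x0))\<^sup>2 = t\<^sup>2 * (norm (x1 - x2))\<^sup>2"
      by (simp_all add: power_mult_distrib)
    show ?thesis unfolding n C_def K_def rho_def by (simp add: field_simps power2_eq_square)
  qed
  finally show "Fobj M phi H c (t *\<^sub>R x1 + (1 - t) *\<^sub>R x2) y
      \<le> t * Fobj M phi H c x1 y + (1 - t) * Fobj M phi H c x2 y + rho / 2 * (t * (1 - t)) * (norm (x1 - x2))\<^sup>2"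
    by (simp add: x0_def)
qed

lemma has_derivative_Fobj_y:
  shows "integrable M (\<lambda>\<xi>. grad (\<lambda>y. phi (hvec H (c x \<xi>)) y \<xi>) y)"
    and "((\<lambda>y. Fobj M phi H c x y) has_derivative
          (\<lambda>k. inner (\<integral>\<xi>. grad (\<lambda>y. phi (hvec H (c x \<xi>)) y \<xi>) y \<partial>M) k)) (at y)"
  using has_derivative_integral_grad[OF borel_measurable_phi_comp[OF borel_measurable_hvec_H_c]
      integrable_phi_H phi_differentiable_y phi_lipschitz_y norm_grad_y_diff_le]
  by (simp_all add: Fobj_def)


lemma rho_nonneg: "0 \<le> rho"
  unfolding rho_def using Lphi_nonneg lH_nonneg lc_nonneg Lc_nonneg lphi_nonneg by simp

end

section \<open>The smoothed problem\<close>

lemma infdist_zero_translate: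
  fixes a :: "'a::real_normed_vector"
  shows "infdist 0 ((\<lambda>v. a + v) ` N) = infdist (- a) N"
proof -
  have "dist 0 (a + v) = dist (- a) v" for v
    by (simp add: dist_norm norm_minus_commute[of "- a"] add.commute)
  then show ?thesis unfolding infdist_def by (simp add: image_image)
qed

lemma infdist_translate_square_le:
  fixes a b :: "'a::real_normed_vector"
  assumes "norm (a - b) \<le> e"
  shows "(infdist 0 ((\<lambda>v. a + v) ` N))\<^sup>2 \<le> 2 * (infdist 0 ((\<lambda>v. b + v) ` N))\<^sup>2 + 2 * e\<^sup>2"
proof -
  define p q where "p = infdist (- a) N" and "q = infdist (- b) N"
  have "p \<le> q + e"
    using infdist_triangle[of "- a" N "- b"] assms by (simp add: p_def q_def dist_norm norm_minus_commute)
  then have "p\<^sup>2 \<le> (q + e)\<^sup>2" by (intro power_mono) (simp_all add: p_def infdist_nonneg)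
  also have "\<dots> \<le> 2 * q\<^sup>2 + 2 * e\<^sup>2" using sum_squares_bound[of q e] by (simp add: power2_sum)
  finally show ?thesis by (simp add: infdist_zero_translate p_def q_def)
qed

lemma infdist_zero_square_le_norm: "v \<in> S \<Longrightarrow> (infdist 0 S)\<^sup>2 \<le> (norm v)\<^sup>2"
  using infdist_le[of v S 0] by (intro power_mono) (simp_all add: infdist_nonneg)

lemma wsubdiff_indicatorI:
  assumes "x \<in> X"
    and "\<And>x'. x' \<in> X \<Longrightarrow> F x + inner v (x' - x) - \<rho> / 2 * (norm (x' - x))\<^sup>2 - \<delta> \<le> F x'"
  shows "v \<in> wsubdiff \<rho> \<delta> (\<lambda>x'. ereal (F x') + iota X x') x"
  using assms by (auto simp: wsubdiff_def iota_def add_diff_eq)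

locale composite_problem = composite_objective M c lc Lc phi lphi Lphi h lh
  for M :: "'xi measure" and c :: "'x::euclidean_space \<Rightarrow> 'xi \<Rightarrow> 'c::euclidean_space" and lc Lc
    and phi :: "real^'h::finite \<Rightarrow> 'y::euclidean_space \<Rightarrow> 'xi \<Rightarrow> real" and lphi Lphi
    and h :: "'h \<Rightarrow> 'c \<Rightarrow> real" and lh +
  fixes lam :: real
  assumes lam_pos: "0 < lam"
begin

lemma integrable_phi_moreau: "integrable M (\<lambda>\<xi>. phi (hvec (\<lambda>j. moreau lam (h j)) (c x \<xi>)) y \<xi>)"
proof (rule integrable_phi_comp[OF _ borel_measurable_hvec_H_c integrable_phi_H])
  show "(\<lambda>\<xi>. hvec (\<lambda>j. moreau lam (h j)) (c x \<xi>)) \<in> borel_measurable M"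
    using lipschitz_on_continuous_on[OF lipschitz_on_hvec[OF lipschitz_on_moreau[OF H_lipschitz lam_pos]]]
    by (intro measurable_compose[OF c_measurable] borel_measurable_continuous_onI)
  show "norm (hvec (\<lambda>j. moreau lam (h j)) (c x \<xi>) - hvec h (c x \<xi>)) \<le> sqrt (real CARD('h)) * (lam * lh\<^sup>2 / 2)" for \<xi>
    using norm_hvec_minus_hlam_le[OF H_lipschitz lam_pos] by (simp add: hlam_eq_hvec norm_minus_commute)
qed

sublocale smoothed: composite_objective M c lc Lc phi lphi Lphi "\<lambda>j. moreau lam (h j)" lh
  by unfold_locales
    (simp_all add: convex_on_moreau[OF H_lipschitz lam_pos H_convex] lipschitz_on_moreau[OF H_lipschitz lam_pos]
      integrable_phi_moreau)

lemma Flam_eq_Fobj: "Flam M lam phi h c = Fobj M phi (\<lambda>j. moreau lam (h j)) c"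
  by (simp add: fun_eq_iff Flam_def Fobj_def hlam_eq_hvec)

lemma Flam_le_Fobj: "Flam M lam phi h c x y \<le> Fobj M phi h c x y"
  unfolding Flam_eq_Fobj Fobj_def
  by (intro integral_mono integrable_phi_H smoothed.integrable_phi_H phi_mono)
     (simp_all add: moreau_le_self[OF H_lipschitz lam_pos])

lemma Fobj_le_Flam: "Fobj M phi h c x y \<le> Flam M lam phi h c x y + lphi * sqrt (real CARD('h)) * (lam * lh\<^sup>2 / 2)"
proof -
  have "phi (hvec h (c x \<xi>)) y \<xi> - phi (hvec (\<lambda>j. moreau lam (h j)) (c x \<xi>)) y \<xi>
      \<le> lphi * sqrt (real CARD('h)) * (lam * lh\<^sup>2 / 2)" if "\<xi> \<in> space M" for \<xi>
  proof -
    have "phi (hvec h (c x \<xi>)) y \<xi> - phi (hvec (\<lambda>j. moreau lam (h j)) (c x \<xi>)) y \<xi>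
        \<le> lphi * norm (hvec h (c x \<xi>) - hlam lam h (c x \<xi>))"
      using lipschitz_on_normD[OF phi_lipschitz_u[OF that]] by (simp add: hlam_eq_hvec abs_le_iff)
    also have "\<dots> \<le> lphi * (sqrt (real CARD('h)) * (lam * lh\<^sup>2 / 2))"
      by (rule mult_left_mono[OF norm_hvec_minus_hlam_le[OF H_lipschitz lam_pos] lphi_nonneg])
    finally show ?thesis by (simp add: mult_ac)
  qed
  then have "(\<integral>\<xi>. phi (hvec h (c x \<xi>)) y \<xi> - phi (hvec (\<lambda>j. moreau lam (h j)) (c x \<xi>)) y \<xi> \<partial>M)
      \<le> lphi * sqrt (real CARD('h)) * (lam * lh\<^sup>2 / 2)"
    by (intro integral_le_const AE_I2 Bochner_Integration.integrable_diff integrable_phi_H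
        smoothed.integrable_phi_H)
  then show ?thesis
    using integrable_phi_H smoothed.integrable_phi_H by (simp add: Flam_eq_Fobj Fobj_def)
qed

lemma norm_grad_y_Fobj_minus_Flam_le:
  shows "(\<lambda>y. Fobj M phi h c x y) differentiable (at y)"
    and "(\<lambda>y. Flam M lam phi h c x y) differentiable (at y)"
    and "norm (grad (\<lambda>y. Fobj M phi h c x y) y - grad (\<lambda>y. Flam M lam phi h c x y) y)
      \<le> Lphi * sqrt (real CARD('h)) * (lam * lh\<^sup>2 / 2)"
proof -
  let ?G = "\<lambda>\<xi>. grad (\<lambda>y. phi (hvec h (c x \<xi>)) y \<xi>) y"
  let ?Gl = "\<lambda>\<xi>. grad (\<lambda>y. phi (hvec (\<lambda>j. moreau lam (h j)) (c x \<xi>)) y \<xi>) y"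
  note F = has_derivative_Fobj_y[of x y] and Fl = smoothed.has_derivative_Fobj_y[of x y]
  show "(\<lambda>y. Fobj M phi h c x y) differentiable (at y)" "(\<lambda>y. Flam M lam phi h c x y) differentiable (at y)"
    using F(2) Fl(2) by (auto simp: differentiable_def Flam_eq_Fobj)
  have "norm (?G \<xi> - ?Gl \<xi>) \<le> Lphi * sqrt (real CARD('h)) * (lam * lh\<^sup>2 / 2)" if "\<xi> \<in> space M" for \<xi>
  proof -
    have "norm (?G \<xi> - ?Gl \<xi>) \<le> Lphi * norm (hvec h (c x \<xi>) - hlam lam h (c x \<xi>))"
      using norm_grad_y_diff_le_u[OF that] by (simp add: hlam_eq_hvec)
    also have "\<dots> \<le> Lphi * (sqrt (real CARD('h)) * (lam * lh\<^sup>2 / 2))"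
      by (rule mult_left_mono[OF norm_hvec_minus_hlam_le[OF H_lipschitz lam_pos] Lphi_nonneg])
    finally show ?thesis by (simp add: mult_ac)
  qed
  then have "norm (\<integral>\<xi>. ?G \<xi> - ?Gl \<xi> \<partial>M) \<le> Lphi * sqrt (real CARD('h)) * (lam * lh\<^sup>2 / 2)"
    using F(1) Fl(1)
    by (intro order_trans[OF integral_norm_bound] integral_le_const AE_I2 integrable_norm
        Bochner_Integration.integrable_diff) auto
  then show "norm (grad (\<lambda>y. Fobj M phi h c x y) y - grad (\<lambda>y. Flam M lam phi h c x y) y)
      \<le> Lphi * sqrt (real CARD('h)) * (lam * lh\<^sup>2 / 2)"
    using F Fl by (simp add: grad_eqI Flam_eq_Fobj)
qed

lemma infdist_normal_cone_grad_y_le: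
  "(infdist 0 ((\<lambda>v. - grad (\<lambda>y'. Fobj M phi h c x y') y + v) ` normal_cone Y y))\<^sup>2
    \<le> 2 * (infdist 0 ((\<lambda>v. - grad (\<lambda>y'. Flam M lam phi h c x y') y + v) ` normal_cone Y y))\<^sup>2
      + lam\<^sup>2 * real CARD('h) * Lphi\<^sup>2 * lh ^ 4 / 2"
proof -
  have "norm (- grad (\<lambda>y'. Fobj M phi h c x y') y - - grad (\<lambda>y'. Flam M lam phi h c x y') y)
      \<le> Lphi * sqrt (real CARD('h)) * (lam * lh\<^sup>2 / 2)"
    using norm_grad_y_Fobj_minus_Flam_le(3) by (simp add: norm_minus_commute)
  from infdist_translate_square_le[OF this]
  show ?thesis by (simp add: power_mult_distrib field_simps)
qed

end

locale composite_problem_at = composite_problem M c lc Lc phi lphi Lphi h lh lam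
  for M :: "'xi measure" and c :: "'x::euclidean_space \<Rightarrow> 'xi \<Rightarrow> 'c::euclidean_space" and lc Lc
    and phi :: "real^'h::finite \<Rightarrow> 'y::euclidean_space \<Rightarrow> 'xi \<Rightarrow> real" and lphi Lphi
    and h :: "'h \<Rightarrow> 'c \<Rightarrow> real" and lh lam +
  fixes X :: "'x set" and r :: real and y :: 'y
  assumes X_compact: "compact X" and X_convex: "convex X" and X_nonempty: "X \<noteq> {}"
    and rho_less: "rho < r"
begin

sublocale prox: weakly_convex_proximal X "\<lambda>x. Flam M lam phi h c x y" rho r
proof unfold_locales
  show "continuous_on X (\<lambda>x. Flam M lam phi h c x y)"
    unfolding Flam_eq_Fobj
    by (rule continuous_on_subset[OF lipschitz_on_continuous_on[OF smoothed.lipschitz_Fobj]]) simp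
  show "weakly_convex_on rho X (\<lambda>x. Flam M lam phi h c x y)"
    unfolding Flam_eq_Fobj by (rule weakly_convex_on_subset[OF smoothed.weakly_convex_Fobj]) simp
qed (use X_compact X_convex X_nonempty rho_nonneg rho_less in auto)

lemma dlam_eq_envelope: "dlam M lam r X phi h c y = (\<lambda>z. Inf ((\<lambda>x. Flam M lam phi h c x y + r / 2 * (norm (x - z))\<^sup>2) ` X))"
  by (simp add: fun_eq_iff dlam_def)

lemma dlam_differentiable: "dlam M lam r X phi h c y differentiable (at z)"
  using prox.has_derivative_prox_envelope unfolding dlam_eq_envelope differentiable_def by blast

lemma grad_dlam: "grad (dlam M lam r X phi h c y) z = r *\<^sub>R (z - prox.prox z)"
  unfolding dlam_eq_envelope by (rule grad_eqI[OF prox.has_derivative_prox_envelope])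

lemma Fobj_prox_gradient_lower_bound:
  assumes x: "x \<in> X" and x': "x' \<in> X"
  defines "n \<equiv> norm (x - prox.prox x)"
  shows "Fobj M phi h c x y + inner (r *\<^sub>R (x - prox.prox x)) (x' - x) - rho / 2 * (norm (x' - x))\<^sup>2
      - (rho * diameter X * n + lphi * lh * lc * sqrt (real CARD('h)) * n + (rho / 2 + r) * n\<^sup>2
         + lam * lphi * lh\<^sup>2 * sqrt (real CARD('h)))
    \<le> Fobj M phi h c x' y"
proof -
  define a where "a = prox.prox x"
  define g where "g = r *\<^sub>R (x - a)"
  have "prox.prox_objective x a + (r - rho) / 2 * (norm (x' - a))\<^sup>2 \<le> prox.prox_objective x x'"
    unfolding a_def by (rule prox.prox_objective_growth[OF x'])
  moreover have "r / 2 * (norm (a - x))\<^sup>2 - r / 2 * (norm (x' - x))\<^sup>2 + r / 2 * (norm (x' - a))\<^sup>2 = inner g (x' - a)"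
    unfolding g_def
    by (simp add: power2_norm_eq_inner inner_diff_left inner_diff_right inner_commute algebra_simps)
  ultimately have Fl: "Flam M lam phi h c a y + inner g (x' - a) - rho / 2 * (norm (x' - a))\<^sup>2 \<le> Flam M lam phi h c x' y"
    by (simp add: prox.prox_objective_def field_simps)
  have "Fobj M phi h c x y - lphi * lh * lc * sqrt (real CARD('h)) * n \<le> Fobj M phi h c a y"
    using lipschitz_on_normD[OF lipschitz_Fobj[of y], of x a] by (simp add: n_def a_def abs_le_iff mult_ac)
  moreover have "Fobj M phi h c a y - lam * lphi * lh\<^sup>2 * sqrt (real CARD('h)) \<le> Flam M lam phi h c a y"
  proof -
    have "0 \<le> lam * lphi * lh\<^sup>2 * sqrt (real CARD('h))" using lam_pos lphi_nonneg by simp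
    moreover have "lphi * sqrt (real CARD('h)) * (lam * lh\<^sup>2 / 2) = lam * lphi * lh\<^sup>2 * sqrt (real CARD('h)) / 2"
      by (simp add: mult_ac)
    ultimately show ?thesis using Fobj_le_Flam[of a y] by linarith
  qed
  moreover have "inner g (x' - a) = inner g (x' - x) + r * n\<^sup>2"
    by (simp add: g_def n_def a_def inner_diff_right power2_norm_eq_inner algebra_simps)
  moreover have "rho / 2 * (norm (x' - a))\<^sup>2 \<le> rho / 2 * (norm (x' - x))\<^sup>2 + rho * diameter X * n + rho / 2 * n\<^sup>2"
  proof -
    have "norm (x' - x) \<le> diameter X"
      using diameter_bounded_bound[OF compact_imp_bounded[OF X_compact] x' x] by (simp add: dist_norm)
    then have "inner (x' - x) (x - a) \<le> diameter X * n"
      using Cauchy_Schwarz_ineq2[of "x' - x" "x - a"]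
      by (auto simp: n_def a_def intro: order_trans[OF abs_ge_self] order_trans[OF _ mult_right_mono])
    moreover have "(norm (x' - a))\<^sup>2 = (norm (x' - x))\<^sup>2 + 2 * inner (x' - x) (x - a) + n\<^sup>2"
      using dot_norm[of "x' - x" "x - a"] by (simp add: n_def a_def field_simps)
    ultimately have "(norm (x' - a))\<^sup>2 \<le> (norm (x' - x))\<^sup>2 + 2 * (diameter X * n) + n\<^sup>2"
      by linarith
    from mult_left_mono[OF this, of "rho / 2"] rho_nonneg show ?thesis
      by (simp add: algebra_simps)
  qed
  moreover have "0 \<le> r * n\<^sup>2" using rho_nonneg rho_less by simp
  ultimately show ?thesis
    using Fl Flam_le_Fobj[of x' y] by (simp add: g_def a_def field_simps)
qed


lemma grad_dlam_in_wsubdiff: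
  assumes x: "x \<in> X"
  defines "g \<equiv> grad (dlam M lam r X phi h c y) x"
  shows "g \<in> wsubdiff rho (rho * diameter X / r * norm g + lphi * lh * lc * sqrt (real CARD('h)) / r * norm g
      + (rho / (2 * r\<^sup>2) + 1 / r) * (norm g)\<^sup>2 + lam * lphi * lh\<^sup>2 * sqrt (real CARD('h)))
    (\<lambda>x'. ereal (Fobj M phi h c x' y) + iota X x') x"
proof -
  define n where "n = norm (x - prox.prox x)"
  have r: "0 < r" using rho_nonneg rho_less by linarith
  have g: "g = r *\<^sub>R (x - prox.prox x)" and "norm g = r * n"
    using r by (simp_all add: g_def n_def grad_dlam)
  then have "rho * diameter X / r * norm g + lphi * lh * lc * sqrt (real CARD('h)) / r * norm g
      + (rho / (2 * r\<^sup>2) + 1 / r) * (norm g)\<^sup>2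
    = rho * diameter X * n + lphi * lh * lc * sqrt (real CARD('h)) * n + (rho / 2 + r) * n\<^sup>2"
    using r by (simp add: field_simps power2_eq_square)
  with g show ?thesis
    using Fobj_prox_gradient_lower_bound[OF x] by (auto intro!: wsubdiff_indicatorI[OF x] simp: n_def)
qed
end

theorem lemmaB6:
  fixes M :: "'xi measure"
    and X :: "'x::euclidean_space set" and Y :: "'y::euclidean_space set"
    and c :: "'x \<Rightarrow> 'xi \<Rightarrow> 'c::euclidean_space"
    and h :: "'h::finite \<Rightarrow> 'c \<Rightarrow> real"
    and phi :: "real^'h \<Rightarrow> 'y \<Rightarrow> 'xi \<Rightarrow> real"
    and lc lh lphi Lc Lphi lam r :: real
  assumes P: "prob_space M"
    and Xne: "X \<noteq> {}" and Xcl: "closed X" and Xcvx: "convex X" and Xcpt: "compact X"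
    and Yne: "Y \<noteq> {}" and Ycl: "closed Y" and Ycvx: "convex Y" and Ycpt: "compact Y"
    and c_meas: "\<And>x. (\<lambda>\<xi>. c x \<xi>) \<in> borel_measurable M"
    and phi_meas: "\<And>u y. (\<lambda>\<xi>. phi u y \<xi>) \<in> borel_measurable M"
    and f_int: "\<And>x y. integrable M (\<lambda>\<xi>. phi (hvec h (c x \<xi>)) y \<xi>)"
    and c_diff: "\<And>x \<xi>. \<xi> \<in> space M \<Longrightarrow> (\<lambda>x. c x \<xi>) differentiable (at x)"
    and phi_diff: "\<And>p \<xi>. \<xi> \<in> space M \<Longrightarrow> (\<lambda>(u, y). phi u y \<xi>) differentiable (at p)"
    and c_lip: "\<And>\<xi>. \<xi> \<in> space M \<Longrightarrow> lc-lipschitz_on UNIV (\<lambda>x. c x \<xi>)"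
    and h_cvx: "\<And>j. convex_on UNIV (h j)"
    and h_lip: "\<And>j. lh-lipschitz_on UNIV (h j)"
    and phi_mono: "\<And>u1 u2 y \<xi>. \<xi> \<in> space M \<Longrightarrow> (\<forall>j. u1 $ j \<le> u2 $ j) \<Longrightarrow> phi u1 y \<xi> \<le> phi u2 y \<xi>"
    and phi_lip: "\<And>\<xi>. \<xi> \<in> space M \<Longrightarrow> lphi-lipschitz_on UNIV (\<lambda>(u, y). phi u y \<xi>)"
    and Lc_nn: "0 \<le> Lc" and Lphi_nn: "0 \<le> Lphi"
    and Dc_lip: "\<And>x1 x2. (\<integral>\<^sup>+ \<xi>. ennreal ((onorm (\<lambda>v. frechet_derivative (\<lambda>x. c x \<xi>) (at x1) v
                                   - frechet_derivative (\<lambda>x. c x \<xi>) (at x2) v))\<^sup>2) \<partial>M)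
                 \<le> ennreal (Lc\<^sup>2 * (norm (x1 - x2))\<^sup>2)"
    and D1phi_lip: "\<And>u1 u2 y1 y2 \<xi>. \<xi> \<in> space M \<Longrightarrow>
          (norm (grad (\<lambda>u. phi u y1 \<xi>) u1 - grad (\<lambda>u. phi u y2 \<xi>) u2))\<^sup>2
            \<le> Lphi\<^sup>2 * ((norm (u1 - u2))\<^sup>2 + (norm (y1 - y2))\<^sup>2)"
    and Dyphi_lip: "\<And>u1 u2 y1 y2 \<xi>. \<xi> \<in> space M \<Longrightarrow>
          (norm (grad (\<lambda>y. phi u1 y \<xi>) y1 - grad (\<lambda>y. phi u2 y \<xi>) y2))\<^sup>2
            \<le> Lphi\<^sup>2 * ((norm (u1 - u2))\<^sup>2 + (norm (y1 - y2))\<^sup>2)"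
    and lam_pos: "0 < lam"
    and r_gt: "r > real CARD('h) * Lphi * lh\<^sup>2 * lc\<^sup>2 + Lc * lphi * lh * sqrt (real CARD('h))"
    and xX: "x \<in> X" and yY: "y \<in> Y"
  shows "let dh = real CARD('h);
             rho = dh * Lphi * lh\<^sup>2 * lc\<^sup>2 + Lc * lphi * lh * sqrt dh;
             F = Fobj M phi h c;
             Fl = Flam M lam phi h c;
             d = dlam M lam r X phi h c y;
             g = grad d x;
             delta = rho * diameter X / r * norm g + lphi * lh * lc * sqrt dh / r * norm g
                     + (rho / (2 * r\<^sup>2) + 1 / r) * (norm g)\<^sup>2 + lam * lphi * lh\<^sup>2 * sqrt dh;
             S = wsubdiff rho delta (\<lambda>x'. ereal (F x' y) + iota X x') x
         in d differentiable (at x)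
            \<and> (\<lambda>y'. F x y') differentiable (at y)
            \<and> (\<lambda>y'. Fl x y') differentiable (at y)
            \<and> S \<noteq> {}
            \<and> (infdist 0 S)\<^sup>2 \<le> (norm g)\<^sup>2
            \<and> (infdist 0 ((\<lambda>v. - grad (\<lambda>y'. F x y') y + v) ` normal_cone Y y))\<^sup>2
                \<le> 2 * (infdist 0 ((\<lambda>v. - grad (\<lambda>y'. Fl x y') y + v) ` normal_cone Y y))\<^sup>2
                  + lam\<^sup>2 * dh * Lphi\<^sup>2 * lh ^ 4 / 2"
proof -
  have problem: "composite_problem M c lc Lc phi lphi Lphi h lh lam"
    by (intro composite_problem.intro composite_objective.intro composite_integrand.intro
        mean_square_smooth_map.intro composite_problem_axioms.intro composite_objective_axioms.intro
        composite_integrand_axioms.intro mean_square_smooth_map_axioms.intro P) (fact assms)+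
  then interpret composite_problem M c lc Lc phi lphi Lphi h lh lam .
  have "rho < r" using r_gt by (simp add: rho_def)
  with problem Xcpt Xcvx Xne interpret composite_problem_at M c lc Lc phi lphi Lphi h lh lam X r y
    by (intro composite_problem_at.intro composite_problem_at_axioms.intro)
  note subgradient = grad_dlam_in_wsubdiff[OF xX]
  show ?thesis
    using dlam_differentiable norm_grad_y_Fobj_minus_Flam_le(1,2) infdist_normal_cone_grad_y_le
      subgradient infdist_zero_square_le_norm[OF subgradient]
    unfolding Let_def rho_def by blast
qed

end
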